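(* Let $K\subseteq\mathbb{R}$ be a cubic number field having exactly one real embedding (i.e. $K$ has one real and two complex conjugate embeddings into $\mathbb{C}$), and let $\alpha,\beta\in K$. Then there exists a Peck sequence for the pair $(\alpha,\beta)$.
   Context: For $x\in\mathbb{R}$, $\|x\|$ denotes the distance from $x$ to the nearest integer. A Peck sequence for a pair $(\sigma,\tau)$ of real numbers is a strictly increasing sequence $(s_n)_{n\ge1}$ of positive integers for which there exist constants $M_1,M_2>0$ and an infinite subsequence $(\psi_n)_{n\ge1}$ of $(s_n)$ with all $\psi_n\ge 2$, such that for all $n$: $\max\{\|s_n\sigma\|,\|s_n\tau\|\}<\frac{M_1}{s_n^{1/2}}$ and $\|\psi_n\sigma\|<\frac{M_2}{\psi_n^{1/2}\log\psi_n}$. *)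

theory Defs
  imports Complex_Main
begin

definition dist_int :: "real \<Rightarrow> real" where
  "dist_int x = \<bar>x - of_int (round x)\<bar>"

definition real_subfield :: "real set \<Rightarrow> bool" where
  "real_subfield K \<longleftrightarrow> 0 \<in> K \<and> 1 \<in> K \<and>
     (\<forall>x\<in>K. \<forall>y\<in>K. x + y \<in> K \<and> x * y \<in> K) \<and>
     (\<forall>x\<in>K. - x \<in> K \<and> inverse x \<in> K)"

definition cubic_number_field :: "real set \<Rightarrow> bool" where
  "cubic_number_field K \<longleftrightarrow> real_subfield K \<and>
     (\<exists>b :: nat \<Rightarrow> real. (\<forall>i<3. b i \<in> K) \<and>
        (\<forall>q. (\<forall>i<3. q i \<in> \<rat>) \<and> (\<Sum>i<3. q i * b i) = 0 \<longrightarrow> (\<forall>i<3. q i = 0)) \<and>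
        (\<forall>x\<in>K. \<exists>q. (\<forall>i<3. q i \<in> \<rat>) \<and> x = (\<Sum>i<3. q i * b i)))"

definition complex_embeddings :: "real set \<Rightarrow> (real \<Rightarrow> complex) set" where
  "complex_embeddings K = {\<sigma>. \<sigma> 1 = 1 \<and>
     (\<forall>x\<in>K. \<forall>y\<in>K. \<sigma> (x + y) = \<sigma> x + \<sigma> y \<and> \<sigma> (x * y) = \<sigma> x * \<sigma> y) \<and>
     (\<forall>x. x \<notin> K \<longrightarrow> \<sigma> x = 0)}"

definition real_embeddings :: "real set \<Rightarrow> (real \<Rightarrow> complex) set" where
  "real_embeddings K = {\<sigma> \<in> complex_embeddings K. \<forall>x\<in>K. \<sigma> x \<in> \<real>}"

text \<open>Peck sequence (indexed from 0 instead of 1).\<close>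
definition peck_sequence :: "(nat \<Rightarrow> nat) \<Rightarrow> real \<Rightarrow> real \<Rightarrow> bool" where
  "peck_sequence s \<sigma> \<tau> \<longleftrightarrow> strict_mono s \<and> (\<forall>n. s n > 0) \<and>
     (\<exists>M1 M2 :: real. M1 > 0 \<and> M2 > 0 \<and>
       (\<exists>r :: nat \<Rightarrow> nat. strict_mono r \<and> (\<forall>n. s (r n) \<ge> 2) \<and>
         (\<forall>n. max (dist_int (real (s n) * \<sigma>)) (dist_int (real (s n) * \<tau>))
                 < M1 / sqrt (real (s n))) \<and>
         (\<forall>n. dist_int (real (s (r n)) * \<sigma>)
                 < M2 / (sqrt (real (s (r n))) * ln (real (s (r n)))))))"

end

theory Submission
  imports Defs "HOL-Analysis.Kronecker_Approximation_Theorem"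
begin

text \<open>
  Choose \<open>\<theta> \<in> K\<close> satisfying a monic cubic equation with integer coefficients, so that
  \<open>K = \<rat>(\<theta>)\<close> and \<open>\<O> = \<int>[\<theta>]\<close> is an order of \<open>K\<close>. Let \<open>\<sigma>\<close> be the non-real embedding,
  \<open>Tr x = x + 2 Re (\<sigma> x)\<close> and \<open>Nm x = x |\<sigma> x|\<^sup>2\<close>. A pigeonhole argument on elements of \<open>\<O>\<close> of
  bounded norm produces a unit \<open>\<epsilon> > 1\<close> of \<open>\<O>\<close>, and \<open>\<lambda> = \<sigma> \<epsilon>\<close> satisfies \<open>\<epsilon> |\<lambda>|\<^sup>2 = 1\<close>.
  For \<open>\<omega> > 0\<close> with \<open>\<omega>, \<omega>\<alpha>, \<omega>\<beta> \<in> \<O>\<close> put \<open>s\<^sub>n = Tr (\<epsilon>\<^sup>n \<omega>)\<close>, an integer of size about \<open>\<omega> \<epsilon>\<^sup>n\<close>.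
  Since \<open>Tr (\<epsilon>\<^sup>n \<omega> \<alpha>)\<close> is an integer,
  \<open>\<parallel>s\<^sub>n \<alpha>\<parallel> \<le> |s\<^sub>n \<alpha> - Tr (\<epsilon>\<^sup>n \<omega> \<alpha>)| = 2 |Re (\<lambda>\<^sup>n \<sigma>(\<omega>) (\<alpha> - \<sigma> \<alpha>))| = O(|\<lambda>|\<^sup>n) = O(1 / sqrt s\<^sub>n)\<close>,
  and likewise for \<open>\<beta>\<close>. If \<open>\<omega>\<close> is chosen so that \<open>\<sigma>(\<omega>) (\<alpha> - \<sigma> \<alpha>)\<close> is purely imaginary, the
  error for \<open>\<alpha>\<close> is \<open>O(|Im \<lambda>\<^sup>n|)\<close>, and Dirichlet's approximation theorem applied to \<open>arg \<lambda>\<close> makes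
  this \<open>O(|\<lambda>|\<^sup>n / n)\<close> for infinitely many \<open>n\<close>, which yields the extra factor \<open>log s\<^sub>n\<close>.
\<close>

section \<open>Rational linear algebra\<close>

interpretation rat_vs: vector_space "\<lambda>(q::rat) (x::real). of_rat q * x"
  by unfold_locales (auto simp: algebra_simps of_rat_add of_rat_mult)

lemma rat_dependent_if_card_span_less:
  fixes v :: "nat \<Rightarrow> real" and T :: "real set"
  assumes "finite T" "card T < m" "\<And>i. i < m \<Longrightarrow> v i \<in> rat_vs.span T"
  obtains c :: "nat \<Rightarrow> rat" where "\<exists>i<m. c i \<noteq> 0" "(\<Sum>i<m. of_rat (c i) * v i) = 0"
proof (cases "inj_on v {..<m}")
  case False
  then obtain i j where ij: "i < m" "j < m" "i \<noteq> j" "v i = v j"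
    unfolding inj_on_def by auto
  define c where "c = (\<lambda>k. if k = i then (1::rat) else if k = j then -1 else 0)"
  have "(\<Sum>k<m. of_rat (c k) * v k) = (\<Sum>k\<in>{i,j}. of_rat (c k) * v k)"
    by (rule sum.mono_neutral_right) (use ij in \<open>auto simp: c_def\<close>)
  also have "\<dots> = 0" using ij by (simp add: c_def)
  finally show ?thesis using ij by (intro that[of c]) (auto simp: c_def)
next
  case True
  define S where "S = v ` {..<m}"
  have "card S = m" using True by (simp add: S_def card_image)
  moreover have "S \<subseteq> rat_vs.span T" using assms(3) by (auto simp: S_def)
  ultimately have "rat_vs.dependent S"
    using rat_vs.independent_span_bound[OF assms(1)] assms(2) by fastforce
  then obtain u where u: "\<exists>s\<in>S. u s \<noteq> 0" "(\<Sum>s\<in>S. of_rat (u s) * s) = 0"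
    using rat_vs.dependent_finite[of S] by (auto simp: S_def)
  have "(\<Sum>i<m. of_rat (u (v i)) * v i) = (\<Sum>s\<in>S. of_rat (u s) * s)"
    unfolding S_def by (subst sum.reindex[OF True]) simp
  then show ?thesis using u by (intro that[of "\<lambda>i. u (v i)"]) (auto simp: S_def)
qed

lemma Rats_in_real_subfield:
  assumes "real_subfield K" "x \<in> \<rat>"
  shows "x \<in> K"
proof -
  have int: "of_int n \<in> K" for n
  proof (induction n rule: int_induct[where k=0])
    case base then show ?case using assms by (simp add: real_subfield_def)
  next
    case (step1 i)
    then show ?case using assms unfolding real_subfield_def by (simp add: add.commute)
  next
    case (step2 i)
    have "- (1::real) \<in> K" using assms by (simp add: real_subfield_def)
    then have "of_int i + - 1 \<in> K" using step2 assms unfolding real_subfield_def by blast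
    then show ?case by simp
  qed
  from assms(2) obtain a b where "x = of_int a * inverse (of_int b)"
    by (auto elim!: Rats_cases' simp: divide_inverse)
  then show ?thesis using int assms by (simp add: real_subfield_def)
qed

lemma Rats_irrational_lin_indep:
  assumes "x \<notin> \<rat>" "u \<in> \<rat>" "v \<in> \<rat>" "u + v * x = 0"
  shows "u = 0 \<and> v = 0"
proof (cases "v = 0")
  case False
  then have "x = - u / v" using assms(4) by (simp add: field_simps add_eq_0_iff)
  then show ?thesis using assms(1-3) by simp
qed (use assms in simp)

lemma Rats_int_denominator:
  assumes "x \<in> \<rat>"
  obtains d m :: int where "d > 0" "x = of_int m / of_int d"
  using assms by (auto elim!: Rats_cases')

lemma quadratic_irrational_inverse:
  fixes x p q c d :: real
  assumes x: "x \<notin> \<rat>" "x\<^sup>2 = p * x + q" and Rats: "p \<in> \<rat>" "q \<in> \<rat>" "c \<in> \<rat>" "d \<in> \<rat>"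
    and nz: "c + d * x \<noteq> 0"
  obtains r s where "r \<in> \<rat>" "s \<in> \<rat>" "inverse (c + d * x) = r + s * x"
proof -
  define n where "n = c\<^sup>2 + c * d * p - d\<^sup>2 * q"
  have conj: "(c + d * x) * ((c + d * p) - d * x) = n"
    unfolding n_def by (simp add: algebra_simps power2_eq_square) (use x(2) in \<open>simp add: power2_eq_square algebra_simps\<close>)
  have "(c + d * p) - d * x \<noteq> 0"
  proof
    assume "(c + d * p) - d * x = 0"
    then have "(c + d * p) + (- d) * x = 0" by simp
    moreover have "c + d * p \<in> \<rat>" "- d \<in> \<rat>" using Rats by simp_all
    ultimately have "c + d * p = 0 \<and> - d = 0" using Rats_irrational_lin_indep[OF x(1)] by blast
    then show False using nz by auto
  qed
  then have "n \<noteq> 0" using conj nz by auto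
  then have "(c + d * x) * (((c + d * p) - d * x) / n) = 1" using conj by simp
  then have "inverse (c + d * x) = ((c + d * p) - d * x) / n" by (rule inverse_unique)
  also have "\<dots> = (c + d * p) / n + (- d / n) * x" by (simp add: diff_divide_distrib)
  finally show ?thesis using Rats by (intro that[of "(c + d * p) / n" "- d / n"]) (auto simp: n_def)
qed

lemma cubic_basis_mult:
  fixes t A B C u v w u' v' w' :: "'a::comm_ring_1"
  assumes "t^3 = A * t^2 + B * t + C"
  shows "(u + v * t + w * t^2) * (u' + v' * t + w' * t^2) =
    (u * u' + C * (v * w' + w * v') + A * C * (w * w'))
    + (u * v' + v * u' + B * (v * w' + w * v') + (A * B + C) * (w * w')) * t
    + (u * w' + v * v' + w * u' + A * (v * w' + w * v') + (A^2 + B) * (w * w')) * t^2"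
proof -
  have t4: "t^4 = (A^2 + B) * t^2 + (A * B + C) * t + A * C"
  proof -
    have "t^4 = t * t^3" by (simp add: power_numeral_reduce)
    also have "\<dots> = A * t^3 + B * t^2 + C * t"
      using assms by (simp add: algebra_simps power2_eq_square power3_eq_cube)
    also have "\<dots> = (A^2 + B) * t^2 + (A * B + C) * t + A * C"
      using assms by (simp add: algebra_simps power2_eq_square)
    finally show ?thesis .
  qed
  have "(u + v * t + w * t^2) * (u' + v' * t + w' * t^2) =
     u * u' + (u * v' + v * u') * t + (u * w' + v * v' + w * u') * t^2
     + (v * w' + w * v') * t^3 + (w * w') * t^4"
    by (simp add: algebra_simps power2_eq_square power3_eq_cube power_numeral_reduce)
  then show ?thesis unfolding t4 assms by (simp add: algebra_simps)
qed

section \<open>Diophantine approximation and Peck sequences\<close>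

lemma dist_int_le_abs_diff:
  assumes "y \<in> \<int>"
  shows "dist_int x \<le> \<bar>x - y\<bar>"
proof -
  obtain k where k: "y = of_int k" using assms by (auto elim: Ints_cases)
  have r: "\<bar>x - of_int (round x)\<bar> \<le> 1/2"
    using of_int_round_abs_le[of x] by (simp add: abs_minus_commute)
  show ?thesis
  proof (cases "\<bar>x - y\<bar> \<ge> 1/2")
    case False
    then have "round x = k" using k by (intro round_unique') simp
    then show ?thesis by (simp add: dist_int_def k)
  qed (use r in \<open>simp add: dist_int_def\<close>)
qed

lemma abs_Im_power_le_of_Arg_approx:
  fixes z :: complex and h :: int
  assumes "n \<ge> 1" and approx: "\<bar>real n * (Arg z / (2 * pi)) - of_int h\<bar> \<le> 1 / real n"
  shows "\<bar>Im (z ^ n)\<bar> \<le> 2 * pi * cmod z ^ n / real n"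
proof -
  have "z ^ n = rcis (cmod z ^ n) (real n * Arg z)"
    by (metis DeMoivre2 rcis_cmod_Arg)
  then have "\<bar>Im (z ^ n)\<bar> = cmod z ^ n * \<bar>sin (real n * Arg z - 2 * pi * of_int h)\<bar>"
    by (simp add: abs_mult sin_diff)
  also have "\<dots> \<le> cmod z ^ n * \<bar>real n * Arg z - 2 * pi * of_int h\<bar>"
    by (intro mult_left_mono abs_sin_x_le_abs_x) auto
  also have "\<dots> = cmod z ^ n * (2 * pi * \<bar>real n * (Arg z / (2 * pi)) - of_int h\<bar>)"
  proof -
    have "real n * Arg z - 2 * pi * of_int h = 2 * pi * (real n * (Arg z / (2 * pi)) - of_int h)"
      by (simp add: field_simps)
    then show ?thesis by (simp add: abs_mult)
  qed
  also have "\<dots> \<le> cmod z ^ n * (2 * pi * (1 / real n))"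
    using approx by (intro mult_left_mono) auto
  finally show ?thesis by (simp add: mult.commute)
qed

lemma infinite_powers_near_real_axis:
  fixes z :: complex
  shows "infinite {n. 1 \<le> n \<and> \<bar>Im (z ^ n)\<bar> \<le> 2 * pi * cmod z ^ n / real n}"
    (is "infinite ?G")
proof -
  define \<theta> where "\<theta> = Arg z / (2 * pi)"
  have in_G: "n \<in> ?G" if "n \<ge> 1" "\<bar>real n * \<theta> - of_int h\<bar> \<le> 1 / real n" for n h
    using abs_Im_power_le_of_Arg_approx[OF that[unfolded \<theta>_def]] that(1) by simp
  text \<open>For rational \<open>\<theta> = h / k\<close> every multiple of \<open>k\<close> lies in the set; otherwise the infinitely many
    approximations \<open>|\<theta> - h / k| < 1 / k\<^sup>2\<close> supply unboundedly many \<open>k\<close>.\<close>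
  show ?thesis
  proof (cases "\<theta> \<in> \<rat>")
    case True
    then obtain k h where kh: "k > 0" "\<theta> = of_int h / of_int k"
      by (auto elim!: Rats_cases')
    have "(M + 1) * nat k \<in> ?G" for M
    proof (rule in_G)
      have "real ((M + 1) * nat k) * \<theta> - of_int ((int M + 1) * h) = 0"
        using kh by (simp add: field_simps)
      then show "\<bar>real ((M + 1) * nat k) * \<theta> - of_int ((int M + 1) * h)\<bar> \<le> 1 / real ((M + 1) * nat k)"
        by simp
    qed (use kh in auto)
    moreover have "(M + 1) * nat k > M" for M
    proof -
      have "(M + 1) * 1 \<le> (M + 1) * nat k" using kh(1) by (intro mult_le_mono2) simp
      then show ?thesis by simp
    qed
    ultimately show ?thesis unfolding infinite_nat_iff_unbounded by blast
  next
    case False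
    then have inf: "infinite (approx_set \<theta>)" by (simp add: rational_iff_finite_approx_set)
    have "\<exists>n>M. n \<in> ?G" for M
    proof -
      obtain h k where hk: "(h, k) \<in> approx_set \<theta>" "k > int M"
        using infinite_approx_set[OF inf] by blast
      then have k: "k > 0" "\<bar>\<theta> - of_int h / of_int k\<bar> < 1 / (of_int k)\<^sup>2"
        by (auto simp: approx_set_def)
      have "\<bar>real (nat k) * \<theta> - of_int h\<bar> = of_int k * \<bar>\<theta> - of_int h / of_int k\<bar>"
        using k(1) by (simp add: abs_mult[symmetric] field_simps)
      also have "\<dots> \<le> 1 / real (nat k)"
        using k by (simp add: field_simps power2_eq_square)
      finally have "nat k \<in> ?G" using k(1) by (intro in_G) auto
      then show ?thesis using hk(2) by (intro exI[of _ "nat k"]) auto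
    qed
    then show ?thesis unfolding infinite_nat_iff_unbounded by blast
  qed
qed

lemma eventually_geometric_growth:
  fixes t :: "nat \<Rightarrow> real"
  assumes \<rho>: "\<rho> > 1" and w: "w > 0" and close: "\<And>n. \<bar>t n - w * (\<rho> ^ n)\<^sup>2\<bar> \<le> c"
  shows "eventually (\<lambda>n. 2 \<le> t n \<and> t n < t (Suc n) \<and> sqrt (t n) \<le> sqrt (2 * w) * \<rho> ^ n
            \<and> ln (t n) \<le> 3 * real n * ln \<rho>) sequentially"
proof -
  define X where "X n = (\<rho> ^ n)\<^sup>2" for n
  have X_pow: "X n = (\<rho>\<^sup>2) ^ n" for n by (simp add: X_def power_mult[symmetric] mult.commute)
  have \<rho>2: "\<rho>\<^sup>2 > 1" using \<rho> by (simp add: one_less_power)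
  have c: "c \<ge> 0" using close[of 0] by linarith
  define E where "E = max ((2 * c + 2) / w) ((2 * c + 1) / (w * (\<rho>\<^sup>2 - 1)))"
  obtain Na where Na: "E < (\<rho>\<^sup>2) ^ Na" using real_arch_pow[OF \<rho>2] by blast
  define Nb where "Nb = nat \<lceil>ln (2 * w) / ln \<rho>\<rceil>"
  have ln\<rho>: "ln \<rho> > 0" using \<rho> by simp
  have "2 \<le> t n \<and> t n < t (Suc n) \<and> sqrt (t n) \<le> sqrt (2 * w) * \<rho> ^ n \<and> ln (t n) \<le> 3 * real n * ln \<rho>"
    if n: "n \<ge> max Na Nb" for n
  proof -
    have "(\<rho>\<^sup>2) ^ Na \<le> (\<rho>\<^sup>2) ^ n" using n \<rho>2 by (intro power_increasing) auto
    then have XE: "X n > E" using Na by (simp add: X_pow)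
    have E1: "w * X n > 2 * c + 2"
      using XE w by (simp add: E_def field_simps)
    have E2: "w * X n * (\<rho>\<^sup>2 - 1) > 2 * c + 1"
      using XE w \<rho>2 by (simp add: E_def field_simps)
    have c1: "\<bar>t n - w * X n\<bar> \<le> c" using close by (simp add: X_def)
    have c2: "\<bar>t (Suc n) - w * X (Suc n)\<bar> \<le> c" unfolding X_def by (rule close)
    have X_Suc: "X (Suc n) = \<rho>\<^sup>2 * X n" by (simp add: X_pow)
    have t2: "2 \<le> t n" and t_le: "t n \<le> 2 * w * X n" using c1 E1 c by linarith+
    have "t n < t (Suc n)"
    proof -
      have "w * X (Suc n) - w * X n = w * X n * (\<rho>\<^sup>2 - 1)" unfolding X_Suc by (simp add: algebra_simps)
      then show ?thesis using c1 c2 E2 by linarith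
    qed
    moreover have "sqrt (t n) \<le> sqrt (2 * w) * \<rho> ^ n"
    proof -
      have "sqrt (t n) \<le> sqrt (2 * w * X n)" using t_le by simp
      also have "\<dots> = sqrt (2 * w) * \<rho> ^ n" using \<rho> by (simp add: X_def real_sqrt_mult)
      finally show ?thesis .
    qed
    moreover have "ln (t n) \<le> 3 * real n * ln \<rho>"
    proof -
      have "ln (2 * w) \<le> real n * ln \<rho>"
      proof -
        have "ln (2 * w) / ln \<rho> \<le> real n" using n unfolding Nb_def by linarith
        then show ?thesis using ln\<rho> by (simp add: divide_le_eq)
      qed
      moreover have "ln (t n) \<le> ln (2 * w * X n)" using t_le t2 by simp
      moreover have "ln (2 * w * X n) = ln (2 * w) + 2 * real n * ln \<rho>"
        using w \<rho> by (simp add: X_def ln_mult ln_realpow)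
      ultimately show ?thesis by simp
    qed
    ultimately show ?thesis using t2 by blast
  qed
  then show ?thesis unfolding eventually_sequentially by blast
qed

lemma peck_sequence_of_integer_sequence:
  fixes u :: "nat \<Rightarrow> real" and I :: "nat set"
  assumes u: "\<And>n. u n \<in> \<int>" "\<And>n. 2 \<le> u n" "\<And>n. u n < u (Suc n)"
    and M: "M > 0" "M' > 0"
    and bound: "\<And>n. max (dist_int (u n * \<alpha>)) (dist_int (u n * \<beta>)) < M / sqrt (u n)"
    and I: "infinite I"
    and bound_I: "\<And>n. n \<in> I \<Longrightarrow> dist_int (u n * \<alpha>) < M' / (sqrt (u n) * ln (u n))"
  shows "\<exists>s. peck_sequence s \<alpha> \<beta>"
proof -
  define s where "s n = nat \<lfloor>u n\<rfloor>" for n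
  have s_eq: "real (s n) = u n" for n
  proof -
    obtain j where "u n = of_int j" using u(1) Ints_cases by blast
    then show ?thesis using u(2)[of n] by (simp add: s_def)
  qed
  have "strict_mono s"
    by (rule strict_mono_Suc_iff[THEN iffD2]) (metis s_eq u(3) of_nat_less_iff)
  moreover obtain r :: "nat \<Rightarrow> nat" where "strict_mono r" "\<forall>n. r n \<in> I"
    using infinite_enumerate[OF I] by blast
  moreover have "s n \<ge> 2" for n using u(2)[of n] s_eq[of n] by simp
  ultimately have "peck_sequence s \<alpha> \<beta>"
    unfolding peck_sequence_def s_eq using M bound bound_I
    by (intro conjI exI[of _ M] exI[of _ M'] exI[of _ r] allI) (auto intro: less_le_trans[of 0 2])
  then show ?thesis by blast
qed

lemma peck_sequence_of_trace_approximations: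
  fixes t :: "nat \<Rightarrow> real" and G :: "nat set"
  assumes \<rho>: "\<rho> > 1" and w: "w > 0"
    and close: "\<And>n. \<bar>t n - w * (\<rho> ^ n)\<^sup>2\<bar> \<le> c"
    and t_int: "\<And>n. t n \<in> \<int>"
    and approx_\<alpha>: "\<And>n. \<exists>k\<in>\<int>. \<bar>t n * \<alpha> - k\<bar> \<le> C\<^sub>\<alpha> / \<rho> ^ n"
    and approx_\<beta>: "\<And>n. \<exists>k\<in>\<int>. \<bar>t n * \<beta> - k\<bar> \<le> C\<^sub>\<beta> / \<rho> ^ n"
    and G: "infinite G"
    and approx_G: "\<And>n. n \<in> G \<Longrightarrow> \<exists>k\<in>\<int>. \<bar>t n * \<alpha> - k\<bar> \<le> C\<^sub>G / (real n * \<rho> ^ n)"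
  shows "\<exists>s. peck_sequence s \<alpha> \<beta>"
proof -
  obtain N0 where N0: "\<And>n. n \<ge> N0 \<Longrightarrow>
      (2 \<le> t n \<and> t n < t (Suc n) \<and> sqrt (t n) \<le> sqrt (2 * w) * \<rho> ^ n \<and> ln (t n) \<le> 3 * real n * ln \<rho>)
      \<and> n \<ge> 1"
    using eventually_conj[OF eventually_geometric_growth[OF \<rho> w close] eventually_ge_at_top[of 1]]
    unfolding eventually_sequentially by blast
  have "infinite {k. N0 + k \<in> G}"
    unfolding infinite_nat_iff_unbounded
  proof
    fix M
    obtain n where "n > M + N0" "n \<in> G" using G unfolding infinite_nat_iff_unbounded by blast
    then show "\<exists>k>M. k \<in> {k. N0 + k \<in> G}" by (intro exI[of _ "n - N0"]) auto
  qed
  have \<rho>_pow: "\<rho> ^ n > 0" for n using \<rho> by simp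
  have sw: "sqrt (2 * w) > 0" using w by simp
  have ln\<rho>: "ln \<rho> > 0" using \<rho> by simp
  define M1 where "M1 = sqrt (2 * w) * (\<bar>C\<^sub>\<alpha>\<bar> + \<bar>C\<^sub>\<beta>\<bar> + 1)"
  define M2 where "M2 = 3 * sqrt (2 * w) * ln \<rho> * (\<bar>C\<^sub>G\<bar> + 1)"
  have bound: "dist_int (t m * g) < M1 / sqrt (t m)"
    if m: "m \<ge> N0" and g: "\<exists>k\<in>\<int>. \<bar>t m * g - k\<bar> \<le> C' / \<rho> ^ m" "C' \<le> \<bar>C\<^sub>\<alpha>\<bar> + \<bar>C\<^sub>\<beta>\<bar>" for m g C'
  proof -
    obtain k where k: "k \<in> \<int>" "\<bar>t m * g - k\<bar> \<le> C' / \<rho> ^ m" using g(1) by blast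
    have "dist_int (t m * g) \<le> C' / \<rho> ^ m" using dist_int_le_abs_diff[OF k(1), of "t m * g"] k(2) by linarith
    also have "\<dots> < (\<bar>C\<^sub>\<alpha>\<bar> + \<bar>C\<^sub>\<beta>\<bar> + 1) / \<rho> ^ m" using g(2) \<rho>_pow[of m] by (intro divide_strict_right_mono) auto
    also have "\<dots> = M1 / (sqrt (2 * w) * \<rho> ^ m)" using sw by (simp add: M1_def)
    also have "\<dots> \<le> M1 / sqrt (t m)"
      using N0[OF m] sw \<rho>_pow[of m] by (intro divide_left_mono mult_pos_pos) (auto simp: M1_def)
    finally show ?thesis .
  qed
  have bound_G: "dist_int (t m * \<alpha>) < M2 / (sqrt (t m) * ln (t m))" if m: "m \<ge> N0" "m \<in> G" for m
  proof -
    obtain k where k: "k \<in> \<int>" "\<bar>t m * \<alpha> - k\<bar> \<le> C\<^sub>G / (real m * \<rho> ^ m)" using approx_G[OF m(2)] by blast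
    have f: "2 \<le> t m" "sqrt (t m) \<le> sqrt (2 * w) * \<rho> ^ m" "ln (t m) \<le> 3 * real m * ln \<rho>" "m \<ge> 1"
      using N0[OF m(1)] by auto
    have "dist_int (t m * \<alpha>) \<le> C\<^sub>G / (real m * \<rho> ^ m)"
      using dist_int_le_abs_diff[OF k(1), of "t m * \<alpha>"] k(2) by linarith
    also have "\<dots> < (\<bar>C\<^sub>G\<bar> + 1) / (real m * \<rho> ^ m)" using f(4) \<rho>_pow[of m] by (intro divide_strict_right_mono) auto
    also have "\<dots> = M2 / ((sqrt (2 * w) * \<rho> ^ m) * (3 * real m * ln \<rho>))"
      using sw ln\<rho> by (simp add: M2_def)
    also have "\<dots> \<le> M2 / (sqrt (t m) * ln (t m))"
      using f sw ln\<rho> \<rho>_pow[of m] by (intro divide_left_mono mult_mono mult_pos_pos) (auto simp: M2_def)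
    finally show ?thesis .
  qed
  show ?thesis
  proof (rule peck_sequence_of_integer_sequence[where u = "\<lambda>n. t (N0 + n)" and M = M1 and M' = M2])
    show "infinite {k. N0 + k \<in> G}" by fact
  qed (use t_int N0 sw ln\<rho> bound[OF _ approx_\<alpha>] bound[OF _ approx_\<beta>] bound_G in \<open>auto simp: M1_def M2_def\<close>)
qed

section \<open>Cubic fields\<close>

locale cubic_field =
  fixes K :: "real set" and b :: "nat \<Rightarrow> real"
  assumes subfield: "real_subfield K"
    and basis_in_K: "\<And>i. i < 3 \<Longrightarrow> b i \<in> K"
    and basis_indep: "\<And>q. (\<forall>i<3. q i \<in> \<rat>) \<Longrightarrow> (\<Sum>i<3. q i * b i) = 0 \<Longrightarrow> (\<forall>i<3. q i = 0)"
    and basis_spans: "\<And>x. x \<in> K \<Longrightarrow> \<exists>q. (\<forall>i<3. q i \<in> \<rat>) \<and> x = (\<Sum>i<3. q i * b i)"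
begin

lemma K_add: "x \<in> K \<Longrightarrow> y \<in> K \<Longrightarrow> x + y \<in> K"
  and K_mult: "x \<in> K \<Longrightarrow> y \<in> K \<Longrightarrow> x * y \<in> K"
  and K_uminus: "x \<in> K \<Longrightarrow> - x \<in> K"
  and K_inverse: "x \<in> K \<Longrightarrow> inverse x \<in> K"
  using subfield by (auto simp: real_subfield_def)

lemma K_diff: "x \<in> K \<Longrightarrow> y \<in> K \<Longrightarrow> x - y \<in> K"
  using K_add[of x "-y"] K_uminus[of y] by simp

lemma K_Rats: "x \<in> \<rat> \<Longrightarrow> x \<in> K"
  using Rats_in_real_subfield[OF subfield] .

lemma K_power: "x \<in> K \<Longrightarrow> x ^ n \<in> K"
  by (induction n) (auto intro: K_mult K_Rats)

lemma K_subset_span_basis: "x \<in> K \<Longrightarrow> x \<in> rat_vs.span (b ` {..<3})"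
proof -
  assume "x \<in> K"
  then obtain q where q: "\<forall>i<3. q i \<in> \<rat>" "x = (\<Sum>i<3. q i * b i)" using basis_spans by blast
  have "\<forall>i<3. \<exists>r. q i = of_rat r" using q(1) by (auto simp: Rats_def)
  then obtain r where "\<forall>i<3. q i = of_rat (r i)" by metis
  then have "x = (\<Sum>i<3. of_rat (r i) * b i)" using q(2) by simp
  also have "\<dots> \<in> rat_vs.span (b ` {..<3})"
    by (intro rat_vs.span_sum rat_vs.span_scale rat_vs.span_base) auto
  finally show ?thesis .
qed

lemma linear_dependence_4:
  assumes "v0 \<in> K" "v1 \<in> K" "v2 \<in> K" "v3 \<in> K"
  obtains c0 c1 c2 c3 where "c0 \<in> \<rat>" "c1 \<in> \<rat>" "c2 \<in> \<rat>" "c3 \<in> \<rat>"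
    "c0 \<noteq> 0 \<or> c1 \<noteq> 0 \<or> c2 \<noteq> 0 \<or> c3 \<noteq> 0" "c0 * v0 + c1 * v1 + c2 * v2 + c3 * v3 = 0"
proof -
  define v where "v i = [v0, v1, v2, v3] ! i" for i
  have "card (b ` {..<3}) < 4" using card_image_le[of "{..<3::nat}" b] by simp
  moreover have "v i \<in> rat_vs.span (b ` {..<3})" if "i < 4" for i
    using that assms by (intro K_subset_span_basis) (auto simp: v_def less_Suc_eq numeral_eq_Suc)
  ultimately obtain c where "\<exists>i<4. c i \<noteq> 0" "(\<Sum>i<4. of_rat (c i) * v i) = 0"
    using rat_dependent_if_card_span_less[of "b ` {..<3}" 4 v] by blast
  then show ?thesis
    by (intro that[of "of_rat (c 0)" "of_rat (c 1)" "of_rat (c 2)" "of_rat (c 3)"])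
       (auto simp: v_def less_Suc_eq numeral_eq_Suc lessThan_Suc)
qed

lemma exists_not_in_rat_span_2: "\<exists>y\<in>K. \<forall>r\<in>\<rat>. \<forall>s\<in>\<rat>. y \<noteq> r + s * x"
proof (rule ccontr)
  assume "\<not> ?thesis"
  then have span: "\<exists>r s. r \<in> \<rat> \<and> s \<in> \<rat> \<and> y = r + s * x" if "y \<in> K" for y
    using that by blast
  have "b i \<in> rat_vs.span {1, x}" if i: "i < 3" for i
  proof -
    obtain r s where "r \<in> \<rat>" "s \<in> \<rat>" "b i = r + s * x" using span[OF basis_in_K[OF i]] by blast
    then obtain r' s' where "b i = of_rat r' * 1 + of_rat s' * x" by (auto simp: Rats_def)
    also have "\<dots> \<in> rat_vs.span {1, x}"
      by (intro rat_vs.span_add rat_vs.span_scale rat_vs.span_base) auto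
    finally show ?thesis .
  qed
  moreover have "card {1, x} < (3::nat)" by (simp add: card_insert_if)
  ultimately obtain c where c: "\<exists>i<3. c i \<noteq> 0" "(\<Sum>i<3. of_rat (c i) * b i) = 0"
    using rat_dependent_if_card_span_less[of "{1, x}" 3 b] by blast
  have "\<forall>i<3. of_rat (c i) = (0::real)"
    by (rule basis_indep) (use c(2) in simp_all)
  then show False using c(1) by auto
qed

lemma exists_irrational: "\<exists>t\<in>K. t \<notin> \<rat>"
  using exists_not_in_rat_span_2[of 0] by (simp add: Bex_def) (blast intro: Rats_0)

lemma power_basis_indep:
  assumes x: "x \<in> K" "x \<notin> \<rat>" and Rats: "u \<in> \<rat>" "v \<in> \<rat>" "w \<in> \<rat>"
    and eq: "u + v * x + w * x\<^sup>2 = 0"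
  shows "u = 0 \<and> v = 0 \<and> w = 0"
proof (cases "w = 0")
  case True
  then show ?thesis using Rats_irrational_lin_indep[OF x(2) Rats(1,2)] eq by simp
next
  case False
  text \<open>Then \<open>x\<close> is quadratic, so \<open>\<rat> + \<rat> x\<close> is a field, and a dependence
    \<open>(c\<^sub>0 + c\<^sub>1 x) + (c\<^sub>2 + c\<^sub>3 x) y = 0\<close> of \<open>1, x, y, x y\<close> puts any \<open>y \<in> K\<close> into it.\<close>
  define p q where "p = - v / w" and "q = - u / w"
  have x2: "x\<^sup>2 = p * x + q" using eq False by (simp add: p_def q_def field_simps)
  have pq: "p \<in> \<rat>" "q \<in> \<rat>" using Rats by (simp_all add: p_def q_def)
  obtain y where y: "y \<in> K" "\<forall>r\<in>\<rat>. \<forall>s\<in>\<rat>. y \<noteq> r + s * x"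
    using exists_not_in_rat_span_2 by blast
  obtain c0 c1 c2 c3 where c: "c0 \<in> \<rat>" "c1 \<in> \<rat>" "c2 \<in> \<rat>" "c3 \<in> \<rat>"
    "c0 \<noteq> 0 \<or> c1 \<noteq> 0 \<or> c2 \<noteq> 0 \<or> c3 \<noteq> 0" "c0 * 1 + c1 * x + c2 * y + c3 * (x * y) = 0"
    using linear_dependence_4[OF K_Rats[OF Rats_1] x(1) y(1) K_mult[OF x(1) y(1)]] by blast
  show ?thesis
  proof (cases "c2 + c3 * x = 0")
    case True
    then have "c2 = 0 \<and> c3 = 0" using Rats_irrational_lin_indep[OF x(2) c(3,4)] by simp
    moreover from this have "c0 + c1 * x = 0" using c(6) by simp
    ultimately show ?thesis using Rats_irrational_lin_indep[OF x(2) c(1,2)] c(5) by simp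
  next
    case nz: False
    obtain r s where rs: "r \<in> \<rat>" "s \<in> \<rat>" "inverse (c2 + c3 * x) = r + s * x"
      using quadratic_irrational_inverse[OF x(2) x2 pq c(3,4) nz] by blast
    have "y = - (c0 + c1 * x) * inverse (c2 + c3 * x)"
      using c(6) nz by (simp add: field_simps)
    also have "\<dots> = - (c0 * r + (c0 * s + c1 * r) * x + c1 * s * x\<^sup>2)"
      unfolding rs(3) by (simp add: algebra_simps power2_eq_square)
    also have "\<dots> = - (c0 * r + c1 * s * q) + - (c0 * s + c1 * r + c1 * s * p) * x"
      unfolding x2 by (simp add: algebra_simps)
    finally have "y = - (c0 * r + c1 * s * q) + - (c0 * s + c1 * r + c1 * s * p) * x" .
    moreover have "- (c0 * r + c1 * s * q) \<in> \<rat>" "- (c0 * s + c1 * r + c1 * s * p) \<in> \<rat>"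
      using c rs pq by (auto simp: Rats_minus_iff intro!: Rats_add Rats_mult)
    ultimately show ?thesis using y(2) by blast
  qed
qed

lemma power_basis_spans:
  assumes x: "x \<in> K" "x \<notin> \<rat>" and y: "y \<in> K"
  obtains u v w where "u \<in> \<rat>" "v \<in> \<rat>" "w \<in> \<rat>" "y = u + v * x + w * x\<^sup>2"
proof -
  obtain c0 c1 c2 c3 where c: "c0 \<in> \<rat>" "c1 \<in> \<rat>" "c2 \<in> \<rat>" "c3 \<in> \<rat>"
    "c0 \<noteq> 0 \<or> c1 \<noteq> 0 \<or> c2 \<noteq> 0 \<or> c3 \<noteq> 0" "c0 * 1 + c1 * x + c2 * x\<^sup>2 + c3 * y = 0"
    using linear_dependence_4[OF K_Rats[OF Rats_1] x(1) K_power[OF x(1)] y] by blast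
  have "c3 \<noteq> 0"
  proof
    assume "c3 = 0"
    then show False using power_basis_indep[OF x c(1,2,3)] c(5,6) by simp
  qed
  moreover have "c3 * y = - c0 - c1 * x - c2 * x\<^sup>2" using c(6) by linarith
  ultimately have "y = (- c0 - c1 * x - c2 * x\<^sup>2) / c3" by (simp add: eq_divide_eq mult.commute)
  also have "\<dots> = (- c0 / c3) + (- c1 / c3) * x + (- c2 / c3) * x\<^sup>2" by (simp add: diff_divide_distrib)
  finally have "y = (- c0 / c3) + (- c1 / c3) * x + (- c2 / c3) * x\<^sup>2" .
  then show ?thesis using c(1-4) by (intro that[of "- c0 / c3" "- c1 / c3" "- c2 / c3"]) simp_all
qed

lemma exists_integral_generator:
  obtains t A B C where "t \<in> K" "t \<notin> \<rat>" "t ^ 3 = of_int A * t\<^sup>2 + of_int B * t + of_int C"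
proof -
  obtain t where t: "t \<in> K" "t \<notin> \<rat>" using exists_irrational by blast
  obtain u v w where uvw: "u \<in> \<rat>" "v \<in> \<rat>" "w \<in> \<rat>" "t ^ 3 = u + v * t + w * t\<^sup>2"
    using power_basis_spans[OF t K_power[OF t(1)]] by blast
  obtain du mu where u: "du > 0" "u = of_int mu / of_int du" using Rats_int_denominator[OF uvw(1)] .
  obtain dv mv where v: "dv > 0" "v = of_int mv / of_int dv" using Rats_int_denominator[OF uvw(2)] .
  obtain dw mw where w: "dw > 0" "w = of_int mw / of_int dw" using Rats_int_denominator[OF uvw(3)] .
  text \<open>Scaling \<open>t\<close> by a common denominator \<open>D\<close> clears the denominators of the cubic equation.\<close>
  define D where "D = du * dv * dw"
  have "D > 0" using u v w by (simp add: D_def)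
  have "of_int D * t \<in> K" using K_mult[OF K_Rats[OF Rats_of_int] t(1)] .
  moreover have "of_int D * t \<notin> \<rat>"
  proof
    assume "of_int D * t \<in> \<rat>"
    then have "of_int D * t / of_int D \<in> \<rat>" by (intro Rats_divide) auto
    moreover have "of_int D * t / of_int D = t" using \<open>D > 0\<close> by simp
    ultimately show False using t by simp
  qed
  moreover have "(of_int D * t) ^ 3 = of_int (du * dv * mw) * (of_int D * t)\<^sup>2
      + of_int (D * du * dw * mv) * (of_int D * t) + of_int (D\<^sup>2 * dv * dw * mu)"
  proof -
    have "(of_int D * t) ^ 3 = of_int D ^ 3 * u + of_int D ^ 3 * v * t + of_int D ^ 3 * w * t\<^sup>2"
      by (simp add: uvw(4) power_mult_distrib algebra_simps)
    also have "\<dots> = of_int (du * dv * mw) * (of_int D * t)\<^sup>2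
      + of_int (D * du * dw * mv) * (of_int D * t) + of_int (D\<^sup>2 * dv * dw * mu)"
      using u(1) v(1) w(1) unfolding D_def u(2) v(2) w(2)
      by (simp add: field_simps power2_eq_square power3_eq_cube)
    finally show ?thesis .
  qed
  ultimately show ?thesis by (rule that)
qed

end

section \<open>The complex embedding of a cubic field with one real embedding\<close>

locale cubic_field_generator = cubic_field +
  fixes \<theta> :: real and A B C :: int
  assumes \<theta>_in_K: "\<theta> \<in> K" and \<theta>_irrational: "\<theta> \<notin> \<rat>"
    and \<theta>_cubic: "\<theta> ^ 3 = of_int A * \<theta>\<^sup>2 + of_int B * \<theta> + of_int C"
    and unique_real_embedding: "card (real_embeddings K) = 1"
begin

lemma basis_combination_in_K:
  "u \<in> \<rat> \<Longrightarrow> v \<in> \<rat> \<Longrightarrow> w \<in> \<rat> \<Longrightarrow> u + v * \<theta> + w * \<theta>\<^sup>2 \<in> K"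
  by (intro K_add K_mult K_Rats K_power \<theta>_in_K)

lemma basis_coords_unique:
  assumes "u \<in> \<rat>" "v \<in> \<rat>" "w \<in> \<rat>" "u' \<in> \<rat>" "v' \<in> \<rat>" "w' \<in> \<rat>"
    and "u + v * \<theta> + w * \<theta>\<^sup>2 = u' + v' * \<theta> + w' * \<theta>\<^sup>2"
  shows "u = u' \<and> v = v' \<and> w = w'"
proof -
  have "(u - u') + (v - v') * \<theta> + (w - w') * \<theta>\<^sup>2 = 0" using assms(7) by (simp add: algebra_simps)
  from power_basis_indep[OF \<theta>_in_K \<theta>_irrational _ _ _ this] assms(1-6) show ?thesis by simp
qed

lemma basis_coords_exist:
  assumes "x \<in> K"
  obtains u v w where "u \<in> \<rat>" "v \<in> \<rat>" "w \<in> \<rat>" "x = u + v * \<theta> + w * \<theta>\<^sup>2"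
  using power_basis_spans[OF \<theta>_in_K \<theta>_irrational assms] by blast

definition coords :: "real \<Rightarrow> real \<times> real \<times> real" where
  "coords x = (SOME (u, v, w). u \<in> \<rat> \<and> v \<in> \<rat> \<and> w \<in> \<rat> \<and> x = u + v * \<theta> + w * \<theta>\<^sup>2)"

definition embed :: "complex \<Rightarrow> real \<Rightarrow> complex" where
  "embed z x = (if x \<in> K then (case coords x of (u, v, w) \<Rightarrow> of_real u + of_real v * z + of_real w * z\<^sup>2) else 0)"

definition is_root :: "complex \<Rightarrow> bool" where
  "is_root z \<longleftrightarrow> z ^ 3 = of_int A * z\<^sup>2 + of_int B * z + of_int C"

lemma coords_basis_combination:
  assumes "u \<in> \<rat>" "v \<in> \<rat>" "w \<in> \<rat>"
  shows "coords (u + v * \<theta> + w * \<theta>\<^sup>2) = (u, v, w)"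
proof -
  let ?P = "\<lambda>(u', v', w'). u' \<in> \<rat> \<and> v' \<in> \<rat> \<and> w' \<in> \<rat> \<and> u + v * \<theta> + w * \<theta>\<^sup>2 = u' + v' * \<theta> + w' * \<theta>\<^sup>2"
  have "?P (u, v, w)" using assms by simp
  then have "?P (coords (u + v * \<theta> + w * \<theta>\<^sup>2))" unfolding coords_def by (rule someI)
  then obtain u' v' w' where c: "coords (u + v * \<theta> + w * \<theta>\<^sup>2) = (u', v', w')" and "?P (u', v', w')"
    by (cases "coords (u + v * \<theta> + w * \<theta>\<^sup>2)") auto
  then have "u' \<in> \<rat>" "v' \<in> \<rat>" "w' \<in> \<rat>" "u + v * \<theta> + w * \<theta>\<^sup>2 = u' + v' * \<theta> + w' * \<theta>\<^sup>2"
    by auto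
  from basis_coords_unique[OF assms this] c show ?thesis by simp
qed

lemma embed_basis_combination:
  assumes "u \<in> \<rat>" "v \<in> \<rat>" "w \<in> \<rat>"
  shows "embed z (u + v * \<theta> + w * \<theta>\<^sup>2) = of_real u + of_real v * z + of_real w * z\<^sup>2"
  using basis_combination_in_K[OF assms] coords_basis_combination[OF assms] by (simp add: embed_def)

lemma embed_Rats: "r \<in> \<rat> \<Longrightarrow> embed z r = of_real r"
  using embed_basis_combination[of r 0 0 z] by simp

lemma embed_\<theta>: "embed z \<theta> = z"
  using embed_basis_combination[of 0 1 0 z] by simp

lemma embed_add:
  assumes "x \<in> K" "y \<in> K"
  shows "embed z (x + y) = embed z x + embed z y"
proof -
  obtain u v w where x: "u \<in> \<rat>" "v \<in> \<rat>" "w \<in> \<rat>" "x = u + v * \<theta> + w * \<theta>\<^sup>2"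
    using basis_coords_exist[OF assms(1)] .
  obtain u' v' w' where y: "u' \<in> \<rat>" "v' \<in> \<rat>" "w' \<in> \<rat>" "y = u' + v' * \<theta> + w' * \<theta>\<^sup>2"
    using basis_coords_exist[OF assms(2)] .
  have sum: "x + y = (u + u') + (v + v') * \<theta> + (w + w') * \<theta>\<^sup>2" using x y by (simp add: algebra_simps)
  have "embed z (x + y) = of_real (u + u') + of_real (v + v') * z + of_real (w + w') * z\<^sup>2"
    unfolding sum using x y by (intro embed_basis_combination) simp_all
  also have "\<dots> = embed z x + embed z y"
    unfolding x(4) y(4) embed_basis_combination[OF x(1-3)] embed_basis_combination[OF y(1-3)]
    by (simp add: algebra_simps)
  finally show ?thesis .
qed

lemma embed_mult:
  assumes z: "is_root z" and "x \<in> K" "y \<in> K"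
  shows "embed z (x * y) = embed z x * embed z y"
proof -
  obtain u v w where x: "u \<in> \<rat>" "v \<in> \<rat>" "w \<in> \<rat>" "x = u + v * \<theta> + w * \<theta>\<^sup>2"
    using basis_coords_exist[OF assms(2)] .
  obtain u' v' w' where y: "u' \<in> \<rat>" "v' \<in> \<rat>" "w' \<in> \<rat>" "y = u' + v' * \<theta> + w' * \<theta>\<^sup>2"
    using basis_coords_exist[OF assms(3)] .
  let ?P0 = "u * u' + of_int C * (v * w' + w * v') + of_int A * of_int C * (w * w')"
  let ?P1 = "u * v' + v * u' + of_int B * (v * w' + w * v') + (of_int A * of_int B + of_int C) * (w * w')"
  let ?P2 = "u * w' + v * v' + w * u' + of_int A * (v * w' + w * v') + ((of_int A)\<^sup>2 + of_int B) * (w * w')"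
  have xy: "x * y = ?P0 + ?P1 * \<theta> + ?P2 * \<theta>\<^sup>2"
    unfolding x(4) y(4) by (rule cubic_basis_mult[OF \<theta>_cubic])
  have z': "z ^ 3 = of_real (of_int A) * z\<^sup>2 + of_real (of_int B) * z + of_real (of_int C)"
    using z by (simp add: is_root_def)
  have "embed z (x * y) = of_real ?P0 + of_real ?P1 * z + of_real ?P2 * z\<^sup>2"
    unfolding xy using x y by (intro embed_basis_combination) simp_all
  also have "\<dots> = (of_real u + of_real v * z + of_real w * z\<^sup>2) * (of_real u' + of_real v' * z + of_real w' * z\<^sup>2)"
    using cubic_basis_mult[OF z', of "of_real u" "of_real v" "of_real w" "of_real u'" "of_real v'" "of_real w'"]
    by simp
  also have "\<dots> = embed z x * embed z y" using x y by (simp add: embed_basis_combination)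
  finally show ?thesis .
qed

lemma embed_in_complex_embeddings: "is_root z \<Longrightarrow> embed z \<in> complex_embeddings K"
  unfolding complex_embeddings_def
  using embed_Rats[of 1 z] embed_add embed_mult by (auto simp: embed_def)

lemma real_embedding_\<theta>:
  assumes "\<tau> \<in> real_embeddings K"
  shows "\<tau> \<theta> = of_real \<theta>"
proof -
  have "(\<lambda>x. if x \<in> K then complex_of_real x else 0) \<in> real_embeddings K"
    unfolding real_embeddings_def complex_embeddings_def using K_Rats[of 1] by (auto intro: K_add K_mult)
  then have "\<tau> = (\<lambda>x. if x \<in> K then complex_of_real x else 0)"
    using assms unique_real_embedding by (metis card_1_singletonE singletonD)
  then show ?thesis using \<theta>_in_K by simp
qed

text \<open>The other roots of the cubic equation of \<open>\<theta>\<close> are the roots of \<open>X\<^sup>2 + p X + q\<close>.\<close>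

definition quad_p :: real where "quad_p = \<theta> - of_int A"
definition quad_q :: real where "quad_q = \<theta>\<^sup>2 - of_int A * \<theta> - of_int B"

lemma is_root_if_quadratic_root:
  assumes "z\<^sup>2 + of_real quad_p * z + of_real quad_q = 0"
  shows "is_root z"
proof -
  have "of_int C = quad_q * \<theta>"
    using \<theta>_cubic unfolding quad_q_def by (simp add: algebra_simps power2_eq_square power3_eq_cube)
  then have "(of_int C :: complex) = of_real (quad_q * \<theta>)" by (metis of_real_of_int_eq)
  then have "z ^ 3 - of_int A * z\<^sup>2 - of_int B * z - of_int C
      = (z - of_real \<theta>) * (z\<^sup>2 + of_real quad_p * z + of_real quad_q)"
    unfolding quad_p_def quad_q_def by (simp add: algebra_simps power2_eq_square power3_eq_cube)
  then show ?thesis using assms unfolding is_root_def by algebra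
qed

lemma quadratic_discriminant_neg: "quad_p\<^sup>2 - 4 * quad_q < 0"
proof (rule ccontr)
  assume "\<not> ?thesis"
  then have d: "(sqrt (quad_p\<^sup>2 - 4 * quad_q))\<^sup>2 = quad_p\<^sup>2 - 4 * quad_q" by simp
  text \<open>A real root \<open>r\<close> gives the real embedding \<open>embed r\<close>, so \<open>r = \<theta>\<close> by uniqueness; but the two
    real roots cannot both equal \<open>\<theta>\<close>, as \<open>\<theta>\<close> is irrational.\<close>
  have root_eq: "r = \<theta>" if r: "r\<^sup>2 + quad_p * r + quad_q = 0" for r
  proof -
    have root: "is_root (of_real r)"
      by (rule is_root_if_quadratic_root) (use arg_cong[OF r, of "of_real :: real \<Rightarrow> complex"] in simp)
    have "embed (of_real r) x \<in> \<real>" if "x \<in> K" for x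
      using basis_coords_exist[OF that] by (metis Reals_add Reals_mult Reals_of_real Reals_power embed_basis_combination)
    then have "embed (of_real r) \<in> real_embeddings K"
      using embed_in_complex_embeddings[OF root] unfolding real_embeddings_def by blast
    from real_embedding_\<theta>[OF this] show ?thesis by (simp add: embed_\<theta>)
  qed
  have "(- quad_p + sqrt (quad_p\<^sup>2 - 4 * quad_q)) / 2 = \<theta>" "(- quad_p - sqrt (quad_p\<^sup>2 - 4 * quad_q)) / 2 = \<theta>"
    by (rule root_eq, use d in \<open>simp add: field_simps power2_eq_square\<close>)+
  then have \<theta>: "\<theta> = of_int A / 3" unfolding quad_p_def by simp
  have "\<theta> \<in> \<rat>" by (subst \<theta>) simp
  then show False using \<theta>_irrational by simp
qed

definition \<zeta> :: complex where "\<zeta> = Complex (- quad_p / 2) (sqrt (- (quad_p\<^sup>2 - 4 * quad_q)) / 2)"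

lemma \<zeta>_quadratic_root: "\<zeta>\<^sup>2 + of_real quad_p * \<zeta> + of_real quad_q = 0"
proof -
  have "(sqrt (- (quad_p\<^sup>2 - 4 * quad_q)))\<^sup>2 = - (quad_p\<^sup>2 - 4 * quad_q)"
    using quadratic_discriminant_neg by simp
  then show ?thesis by (simp add: \<zeta>_def complex_eq_iff power2_eq_square field_simps)
qed

lemma is_root_\<zeta>: "is_root \<zeta>"
  by (rule is_root_if_quadratic_root[OF \<zeta>_quadratic_root])

lemma Im_\<zeta>_pos: "Im \<zeta> > 0"
  using quadratic_discriminant_neg by (simp add: \<zeta>_def)

lemma \<zeta>_add_cnj: "\<zeta> + cnj \<zeta> = of_real (- quad_p)"
  by (simp add: \<zeta>_def complex_eq_iff)

lemma \<zeta>_mult_cnj: "\<zeta> * cnj \<zeta> = of_real quad_q"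
proof -
  have "(sqrt (- (quad_p\<^sup>2 - 4 * quad_q)))\<^sup>2 = - (quad_p\<^sup>2 - 4 * quad_q)"
    using quadratic_discriminant_neg by simp
  then show ?thesis by (simp add: \<zeta>_def complex_eq_iff power2_eq_square field_simps)
qed

definition \<sigma> :: "real \<Rightarrow> complex" where "\<sigma> = embed \<zeta>"

lemma \<sigma>_\<theta>: "\<sigma> \<theta> = \<zeta>"
  by (simp add: \<sigma>_def embed_\<theta>)

lemma \<sigma>_basis_combination:
  "u \<in> \<rat> \<Longrightarrow> v \<in> \<rat> \<Longrightarrow> w \<in> \<rat> \<Longrightarrow> \<sigma> (u + v * \<theta> + w * \<theta>\<^sup>2) = of_real u + of_real v * \<zeta> + of_real w * \<zeta>\<^sup>2"
  by (simp add: \<sigma>_def embed_basis_combination)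

lemma \<sigma>_Rats: "r \<in> \<rat> \<Longrightarrow> \<sigma> r = of_real r"
  by (simp add: \<sigma>_def embed_Rats)

lemma \<sigma>_add: "x \<in> K \<Longrightarrow> y \<in> K \<Longrightarrow> \<sigma> (x + y) = \<sigma> x + \<sigma> y"
  by (simp add: \<sigma>_def embed_add)

lemma \<sigma>_mult: "x \<in> K \<Longrightarrow> y \<in> K \<Longrightarrow> \<sigma> (x * y) = \<sigma> x * \<sigma> y"
  by (simp add: \<sigma>_def embed_mult is_root_\<zeta>)

lemma \<sigma>_uminus: "x \<in> K \<Longrightarrow> \<sigma> (- x) = - \<sigma> x"
  using \<sigma>_mult[of "-1" x] \<sigma>_Rats[of "-1"] K_Rats[of "-1"] by simp

lemma \<sigma>_diff: "x \<in> K \<Longrightarrow> y \<in> K \<Longrightarrow> \<sigma> (x - y) = \<sigma> x - \<sigma> y"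
  using \<sigma>_add[of x "- y"] \<sigma>_uminus[of y] K_uminus[of y] by simp

lemma \<sigma>_power: "x \<in> K \<Longrightarrow> \<sigma> (x ^ n) = \<sigma> x ^ n"
  by (induction n) (simp_all add: \<sigma>_Rats \<sigma>_mult K_power)

lemma \<sigma>_inverse: "x \<in> K \<Longrightarrow> \<sigma> (inverse x) = inverse (\<sigma> x)"
proof (cases "x = 0")
  case False
  assume "x \<in> K"
  then have "\<sigma> x * \<sigma> (inverse x) = 1"
    using \<sigma>_mult[of x "inverse x"] K_inverse[of x] \<sigma>_Rats[of 1] False by simp
  then show ?thesis by (metis inverse_unique)
qed (simp add: \<sigma>_Rats)

lemma \<sigma>_nonzero: "x \<in> K \<Longrightarrow> x \<noteq> 0 \<Longrightarrow> \<sigma> x \<noteq> 0"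
  using \<sigma>_mult[of x "inverse x"] K_inverse[of x] \<sigma>_Rats[of 1] by auto

lemma Im_\<sigma>_irrational:
  assumes a: "a \<in> K" "a \<notin> \<rat>"
  shows "Im (\<sigma> a) \<noteq> 0"
proof
  assume "Im (\<sigma> a) = 0"
  then have real: "\<sigma> a \<in> \<real>" by (simp add: complex_is_Real_iff)
  have "\<sigma> x \<in> \<real>" if x: "x \<in> K" for x
  proof -
    obtain u v w where r: "u \<in> \<rat>" "v \<in> \<rat>" "w \<in> \<rat>" "x = u + v * a + w * a\<^sup>2"
      using power_basis_spans[OF a x] by blast
    have "\<sigma> x = of_real u + of_real v * \<sigma> a + of_real w * \<sigma> a ^ 2"
      unfolding r(4) using r(1-3) a(1)
      by (simp add: \<sigma>_add \<sigma>_mult \<sigma>_Rats \<sigma>_power K_add K_mult K_Rats K_power)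
    then show ?thesis using real by simp
  qed
  then have "\<sigma> \<in> real_embeddings K"
    using embed_in_complex_embeddings[OF is_root_\<zeta>] unfolding real_embeddings_def \<sigma>_def by blast
  from real_embedding_\<theta>[OF this] have "\<zeta> = of_real \<theta>" by (simp add: \<sigma>_\<theta>)
  then show False using Im_\<zeta>_pos by simp
qed

end

section \<open>The order \<open>\<int>[\<theta>]\<close>, trace and norm\<close>

context cubic_field_generator
begin

definition lattice_point :: "int \<times> int \<times> int \<Rightarrow> real" where
  "lattice_point t = (case t of (i, j, k) \<Rightarrow> of_int i + of_int j * \<theta> + of_int k * \<theta>\<^sup>2)"

definition \<O> :: "real set" where "\<O> = range lattice_point"

lemma mem_order_iff: "x \<in> \<O> \<longleftrightarrow> (\<exists>i j k. x = of_int i + of_int j * \<theta> + of_int k * \<theta>\<^sup>2)"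
proof
  assume "x \<in> \<O>"
  then show "\<exists>i j k. x = of_int i + of_int j * \<theta> + of_int k * \<theta>\<^sup>2"
    by (auto simp: \<O>_def lattice_point_def split: prod.splits)
next
  assume "\<exists>i j k. x = of_int i + of_int j * \<theta> + of_int k * \<theta>\<^sup>2"
  then obtain i j k where "x = lattice_point (i, j, k)" by (auto simp: lattice_point_def)
  then show "x \<in> \<O>" by (simp add: \<O>_def)
qed

lemma order_subset_K: "x \<in> \<O> \<Longrightarrow> x \<in> K"
  unfolding mem_order_iff using basis_combination_in_K by auto

lemma of_int_in_order: "of_int k \<in> \<O>"
  unfolding mem_order_iff by (rule exI[of _ k], rule exI[of _ 0], rule exI[of _ 0]) simp

lemma \<theta>_in_order: "\<theta> \<in> \<O>"
  unfolding mem_order_iff by (rule exI[of _ 0], rule exI[of _ 1], rule exI[of _ 0]) simp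

lemma order_add: "x \<in> \<O> \<Longrightarrow> y \<in> \<O> \<Longrightarrow> x + y \<in> \<O>"
proof (unfold mem_order_iff, elim exE)
  fix i j k i' j' k' :: int
  assume "x = of_int i + of_int j * \<theta> + of_int k * \<theta>\<^sup>2" "y = of_int i' + of_int j' * \<theta> + of_int k' * \<theta>\<^sup>2"
  then have "x + y = of_int (i + i') + of_int (j + j') * \<theta> + of_int (k + k') * \<theta>\<^sup>2"
    by (simp add: algebra_simps)
  then show "\<exists>i j k. x + y = of_int i + of_int j * \<theta> + of_int k * \<theta>\<^sup>2" by blast
qed

lemma order_mult: "x \<in> \<O> \<Longrightarrow> y \<in> \<O> \<Longrightarrow> x * y \<in> \<O>"
proof (unfold mem_order_iff, elim exE)
  fix u v w u' v' w' :: int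
  assume "x = of_int u + of_int v * \<theta> + of_int w * \<theta>\<^sup>2" "y = of_int u' + of_int v' * \<theta> + of_int w' * \<theta>\<^sup>2"
  then have "x * y = of_int (u * u' + C * (v * w' + w * v') + A * C * (w * w')) +
     of_int (u * v' + v * u' + B * (v * w' + w * v') + (A * B + C) * (w * w')) * \<theta> +
     of_int (u * w' + v * v' + w * u' + A * (v * w' + w * v') + (A\<^sup>2 + B) * (w * w')) * \<theta>\<^sup>2"
    using cubic_basis_mult[OF \<theta>_cubic, of "of_int u" "of_int v" "of_int w" "of_int u'" "of_int v'" "of_int w'"]
    by simp
  then show "\<exists>i j k. x * y = of_int i + of_int j * \<theta> + of_int k * \<theta>\<^sup>2" by blast
qed

lemma order_diff: "x \<in> \<O> \<Longrightarrow> y \<in> \<O> \<Longrightarrow> x - y \<in> \<O>"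
  using order_add[of x "(-1) * y"] order_mult[OF of_int_in_order[of "-1"]] by simp

lemma order_power: "x \<in> \<O> \<Longrightarrow> x ^ n \<in> \<O>"
  by (induction n) (use of_int_in_order[of 1] order_mult in auto)

lemma order_Rats_imp_Ints: "x \<in> \<O> \<Longrightarrow> x \<in> \<rat> \<Longrightarrow> x \<in> \<int>"
proof -
  assume "x \<in> \<O>" "x \<in> \<rat>"
  then obtain i j k :: int where "x + 0 * \<theta> + 0 * \<theta>\<^sup>2 = of_int i + of_int j * \<theta> + of_int k * \<theta>\<^sup>2"
    unfolding mem_order_iff by auto
  from basis_coords_unique[OF \<open>x \<in> \<rat>\<close> _ _ _ _ _ this] show ?thesis by simp
qed

lemma quad_p_in_order: "quad_p \<in> \<O>"
  unfolding quad_p_def by (intro order_diff \<theta>_in_order of_int_in_order)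

lemma quad_q_in_order: "quad_q \<in> \<O>"
  unfolding quad_q_def by (intro order_diff order_mult order_power \<theta>_in_order of_int_in_order)

definition Tr :: "real \<Rightarrow> real" where "Tr x = x + 2 * Re (\<sigma> x)"

definition Nm :: "real \<Rightarrow> real" where "Nm x = x * (cmod (\<sigma> x))\<^sup>2"

lemma of_real_Tr: "complex_of_real (Tr x) = of_real x + \<sigma> x + cnj (\<sigma> x)"
  by (simp add: Tr_def complex_add_cnj)

lemma of_real_Nm: "complex_of_real (Nm x) = of_real x * (\<sigma> x * cnj (\<sigma> x))"
  using complex_norm_square[of "\<sigma> x"] by (simp add: Nm_def)

lemma Tr_basis_combination:
  assumes "u \<in> \<rat>" "v \<in> \<rat>" "w \<in> \<rat>"
  shows "Tr (u + v * \<theta> + w * \<theta>\<^sup>2) = 3 * u + v * of_int A + w * (of_int A ^ 2 + 2 * of_int B)"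
proof -
  have "complex_of_real (Tr (u + v * \<theta> + w * \<theta>\<^sup>2)) =
    of_real (u + v * \<theta> + w * \<theta>\<^sup>2) + (of_real u + of_real v * \<zeta> + of_real w * \<zeta>\<^sup>2)
      + (of_real u + of_real v * cnj \<zeta> + of_real w * cnj \<zeta> ^ 2)"
    unfolding of_real_Tr \<sigma>_basis_combination[OF assms] by simp
  also have "\<dots> = of_real (3 * u + v * (\<theta> - quad_p) + w * (\<theta>\<^sup>2 + quad_p\<^sup>2 - 2 * quad_q))"
    using \<zeta>_add_cnj[unfolded of_real_minus] \<zeta>_mult_cnj by simp algebra
  also have "3 * u + v * (\<theta> - quad_p) + w * (\<theta>\<^sup>2 + quad_p\<^sup>2 - 2 * quad_q)
      = 3 * u + v * of_int A + w * (of_int A ^ 2 + 2 * of_int B)"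
    unfolding quad_p_def quad_q_def by (simp add: algebra_simps power2_eq_square)
  finally show ?thesis by (simp only: of_real_eq_iff)
qed

lemma Tr_Rats: "x \<in> K \<Longrightarrow> Tr x \<in> \<rat>"
  by (elim basis_coords_exist) (simp add: Tr_basis_combination)

lemma Tr_Ints: "x \<in> \<O> \<Longrightarrow> Tr x \<in> \<int>"
  unfolding mem_order_iff using Tr_basis_combination[of "of_int _" "of_int _" "of_int _"] by auto

lemma Nm_mult: "x \<in> K \<Longrightarrow> y \<in> K \<Longrightarrow> Nm (x * y) = Nm x * Nm y"
  by (simp add: Nm_def \<sigma>_mult norm_mult power_mult_distrib)

lemma Nm_one: "Nm 1 = 1"
  using \<sigma>_Rats[of 1] by (simp add: Nm_def)

lemma Nm_pos: "x \<in> K \<Longrightarrow> x > 0 \<Longrightarrow> Nm x > 0"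
  using \<sigma>_nonzero[of x] by (simp add: Nm_def)

text \<open>Newton's identity \<open>6 e\<^sub>3 = p\<^sub>1\<^sup>3 - 3 p\<^sub>1 p\<^sub>2 + 2 p\<^sub>3\<close> for the conjugates \<open>x, \<sigma> x, cnj (\<sigma> x)\<close>.\<close>

lemma Nm_Rats: "x \<in> K \<Longrightarrow> Nm x \<in> \<rat>"
proof -
  assume x: "x \<in> K"
  have Tr_power: "complex_of_real (Tr (x ^ k)) = of_real x ^ k + \<sigma> x ^ k + cnj (\<sigma> x) ^ k" for k
    unfolding of_real_Tr \<sigma>_power[OF x] by simp
  have "complex_of_real (6 * Nm x) = of_real (Tr x ^ 3 - 3 * Tr x * Tr (x\<^sup>2) + 2 * Tr (x ^ 3))"
    using of_real_Nm[of x] Tr_power[of 1] Tr_power[of 2] Tr_power[of 3]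
    by (simp add: algebra_simps power2_eq_square power3_eq_cube)
  then have "6 * Nm x = Tr x ^ 3 - 3 * Tr x * Tr (x\<^sup>2) + 2 * Tr (x ^ 3)" by (simp only: of_real_eq_iff)
  moreover have "Tr x ^ 3 - 3 * Tr x * Tr (x\<^sup>2) + 2 * Tr (x ^ 3) \<in> \<rat>"
    using Tr_Rats[OF x] Tr_Rats[OF K_power[OF x]] by simp
  ultimately have "6 * Nm x / 6 \<in> \<rat>" by (metis Rats_divide Rats_number_of)
  then show ?thesis by simp
qed

text \<open>\<open>|\<sigma> x|\<^sup>2 = \<sigma> x \<cdot> cnj (\<sigma> x)\<close> is a polynomial with integer coefficients in the elementary symmetric
  functions \<open>-quad_p\<close> and \<open>quad_q\<close> of \<open>\<zeta>\<close> and \<open>cnj \<zeta>\<close>.\<close>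

lemma cmod_\<sigma>_squared_in_order:
  assumes "x \<in> \<O>"
  shows "(cmod (\<sigma> x))\<^sup>2 \<in> \<O>"
proof -
  obtain i j k :: int where x: "x = of_int i + of_int j * \<theta> + of_int k * \<theta>\<^sup>2"
    using assms unfolding mem_order_iff by blast
  define W where "W = of_int i ^ 2 - of_int i * of_int j * quad_p + of_int i * of_int k * (quad_p\<^sup>2 - 2 * quad_q)
     + of_int j ^ 2 * quad_q - of_int j * of_int k * quad_q * quad_p + of_int k ^ 2 * quad_q\<^sup>2"
  have "\<sigma> x = of_int i + of_int j * \<zeta> + of_int k * \<zeta>\<^sup>2"
    unfolding x using \<sigma>_basis_combination[of "of_int i" "of_int j" "of_int k"] by simp
  then have "complex_of_real ((cmod (\<sigma> x))\<^sup>2) =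
      of_int i ^ 2 + of_int i * of_int j * (\<zeta> + cnj \<zeta>) + of_int i * of_int k * ((\<zeta> + cnj \<zeta>)\<^sup>2 - 2 * (\<zeta> * cnj \<zeta>))
      + of_int j ^ 2 * (\<zeta> * cnj \<zeta>) + of_int j * of_int k * (\<zeta> * cnj \<zeta>) * (\<zeta> + cnj \<zeta>) + of_int k ^ 2 * (\<zeta> * cnj \<zeta>)\<^sup>2"
    using complex_norm_square[of "\<sigma> x"] by (simp add: algebra_simps power2_eq_square)
  also have "\<dots> = complex_of_real W"
    unfolding \<zeta>_add_cnj \<zeta>_mult_cnj W_def by (simp add: algebra_simps power2_eq_square)
  finally have "(cmod (\<sigma> x))\<^sup>2 = W" by (simp only: of_real_eq_iff)
  moreover have "W \<in> \<O>" unfolding W_def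
    by (intro order_add order_diff order_mult of_int_in_order order_power quad_p_in_order quad_q_in_order
        of_int_in_order[of 2, simplified])
  ultimately show ?thesis by simp
qed

lemma Nm_Ints: "x \<in> \<O> \<Longrightarrow> Nm x \<in> \<int>"
  unfolding Nm_def
  by (intro order_Rats_imp_Ints order_mult cmod_\<sigma>_squared_in_order)
     (auto simp: Nm_def[symmetric] intro: Nm_Rats order_subset_K)

end

section \<open>A unit of \<open>\<int>[\<theta>]\<close> greater than one\<close>

lemma pigeonhole_close_pair:
  fixes X :: "'a \<Rightarrow> real" and Z :: "'a \<Rightarrow> complex" and k1 k2 :: int
  assumes P: "finite P" "\<And>t. t \<in> P \<Longrightarrow> \<bar>X t\<bar> \<le> R1" "\<And>t. t \<in> P \<Longrightarrow> cmod (Z t) \<le> R2"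
    and d: "d1 > 0" "d2 > 0" "2 * R1 / d1 \<le> of_int k1" "2 * R2 / d2 \<le> of_int k2"
    and card: "nat (k1 + 1) * nat (k2 + 1) ^ 2 < card P"
  obtains t1 t2 where "t1 \<in> P" "t2 \<in> P" "t1 \<noteq> t2" "\<bar>X t1 - X t2\<bar> < d1"
    "\<bar>Re (Z t1 - Z t2)\<bar> < d2" "\<bar>Im (Z t1 - Z t2)\<bar> < d2"
proof -
  text \<open>Sort the points into cells of the box \<open>[-R1, R1] \<times> [-R2, R2]\<^sup>2\<close> of side lengths \<open>d1, d2, d2\<close>.\<close>
  define cell :: "real \<Rightarrow> real \<Rightarrow> real \<Rightarrow> int" where "cell R d x = \<lfloor>(x + R) / d\<rfloor>" for R d x
  define f where "f t = (cell R1 d1 (X t), cell R2 d2 (Re (Z t)), cell R2 d2 (Im (Z t)))" for t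
  have cell_range: "cell R d x \<in> {0..k}" if "\<bar>x\<bar> \<le> R" "d > 0" "2 * R / d \<le> of_int k" for x R d k
  proof -
    have "(x + R) / d \<le> 2 * R / d" using that by (intro divide_right_mono) auto
    then show ?thesis using that by (auto simp: cell_def floor_le_iff)
  qed
  have cell_close: "\<bar>x - y\<bar> < d" if "cell R d x = cell R d y" "d > 0" for x y R d
  proof -
    have "\<bar>(x + R) / d - (y + R) / d\<bar> < 1"
      using that(1) floor_correct[of "(x + R) / d"] floor_correct[of "(y + R) / d"] unfolding cell_def by linarith
    then show ?thesis using that(2) by (simp add: diff_divide_distrib[symmetric] abs_divide)
  qed
  have "f ` P \<subseteq> {0..k1} \<times> {0..k2} \<times> {0..k2}"
  proof (rule image_subsetI)
    fix t assume "t \<in> P"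
    then have "\<bar>Re (Z t)\<bar> \<le> R2" "\<bar>Im (Z t)\<bar> \<le> R2"
      using P(3) abs_Re_le_cmod abs_Im_le_cmod order_trans by blast+
    then show "f t \<in> {0..k1} \<times> {0..k2} \<times> {0..k2}"
      using cell_range P(2)[OF \<open>t \<in> P\<close>] d by (simp add: f_def)
  qed
  then have "card (f ` P) \<le> nat (k1 + 1) * nat (k2 + 1) ^ 2"
    using card_mono[of "{0..k1} \<times> {0..k2} \<times> {0..k2}" "f ` P"] by (simp add: card_cartesian_product power2_eq_square)
  then have "\<not> inj_on f P" using card by (intro pigeonhole) simp
  then obtain t1 t2 where "t1 \<in> P" "t2 \<in> P" "t1 \<noteq> t2" "f t1 = f t2" unfolding inj_on_def by blast
  then show ?thesis using cell_close d by (intro that[of t1 t2]) (auto simp: f_def)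
qed

lemma box_card_less: "(m::nat) \<ge> 1 \<Longrightarrow> (4 * m ^ 4 + 1) * (2 * m + 1)\<^sup>2 < (4 * m\<^sup>2 + 1) ^ 3"
proof -
  assume m: "m \<ge> 1"
  have "(2 * m + 1)\<^sup>2 \<le> (3 * m)\<^sup>2" using m by (intro power_mono) auto
  moreover have "4 * m ^ 4 + 1 \<le> 5 * m ^ 4" using m by simp
  ultimately have "(4 * m ^ 4 + 1) * (2 * m + 1)\<^sup>2 \<le> 5 * m ^ 4 * (3 * m)\<^sup>2" by (intro mult_mono) auto
  also have "\<dots> = 45 * m ^ 6" by (simp add: power_mult_distrib flip: power_add)
  also have "\<dots> < (4 * m\<^sup>2) ^ 3" using m by (simp add: power_mult_distrib flip: power_mult)
  also have "\<dots> < (4 * m\<^sup>2 + 1) ^ 3" by (intro power_strict_mono) auto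
  finally show ?thesis .
qed

context cubic_field_generator
begin

lemma lattice_point_diff:
  "lattice_point (i, j, k) - lattice_point (i', j', k') = lattice_point (i - i', j - j', k - k')"
  by (simp add: lattice_point_def algebra_simps)

lemma lattice_point_eq_0_iff: "lattice_point (i, j, k) = 0 \<longleftrightarrow> i = 0 \<and> j = 0 \<and> k = 0"
proof
  assume "lattice_point (i, j, k) = 0"
  then have "of_int i + of_int j * \<theta> + of_int k * \<theta>\<^sup>2 = 0 + 0 * \<theta> + 0 * \<theta>\<^sup>2" by (simp add: lattice_point_def)
  from basis_coords_unique[OF _ _ _ _ _ _ this] show "i = 0 \<and> j = 0 \<and> k = 0" by simp
qed (simp add: lattice_point_def)

definition size\<^sub>\<theta> :: real where "size\<^sub>\<theta> = 1 + \<bar>\<theta>\<bar> + \<theta>\<^sup>2"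
definition size\<^sub>\<zeta> :: real where "size\<^sub>\<zeta> = 1 + cmod \<zeta> + cmod \<zeta> ^ 2"

lemma abs_lattice_point_le:
  assumes "\<bar>i\<bar> \<le> H" "\<bar>j\<bar> \<le> H" "\<bar>k\<bar> \<le> H"
  shows "\<bar>lattice_point (i, j, k)\<bar> \<le> of_int H * size\<^sub>\<theta>"
proof -
  have "\<bar>lattice_point (i, j, k)\<bar> \<le> \<bar>of_int i + of_int j * \<theta>\<bar> + \<bar>of_int k * \<theta>\<^sup>2\<bar>"
    unfolding lattice_point_def prod.case by (rule abs_triangle_ineq)
  also have "\<dots> \<le> \<bar>of_int i\<bar> + \<bar>of_int j * \<theta>\<bar> + \<bar>of_int k * \<theta>\<^sup>2\<bar>"
    by (intro add_mono abs_triangle_ineq order_refl)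
  also have "\<dots> = \<bar>of_int i\<bar> + \<bar>of_int j\<bar> * \<bar>\<theta>\<bar> + \<bar>of_int k\<bar> * \<theta>\<^sup>2"
    by (simp add: abs_mult)
  also have "\<dots> \<le> of_int H + of_int H * \<bar>\<theta>\<bar> + of_int H * \<theta>\<^sup>2"
    using assms by (intro add_mono mult_right_mono) auto
  finally show ?thesis by (simp add: size\<^sub>\<theta>_def algebra_simps)
qed

lemma norm_\<sigma>_lattice_point_le:
  assumes "\<bar>i\<bar> \<le> H" "\<bar>j\<bar> \<le> H" "\<bar>k\<bar> \<le> H"
  shows "cmod (\<sigma> (lattice_point (i, j, k))) \<le> of_int H * size\<^sub>\<zeta>"
proof -
  have "\<sigma> (lattice_point (i, j, k)) = of_int i + of_int j * \<zeta> + of_int k * \<zeta>\<^sup>2"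
    unfolding lattice_point_def using \<sigma>_basis_combination[of "of_int i" "of_int j" "of_int k"] by simp
  then have "cmod (\<sigma> (lattice_point (i, j, k))) \<le> cmod (of_int i + of_int j * \<zeta>) + cmod (of_int k * \<zeta>\<^sup>2)"
    by (simp add: norm_triangle_ineq)
  also have "\<dots> \<le> cmod (of_int i) + cmod (of_int j * \<zeta>) + cmod (of_int k * \<zeta>\<^sup>2)"
    by (intro add_mono norm_triangle_ineq order_refl)
  also have "\<dots> = \<bar>of_int i\<bar> + \<bar>of_int j\<bar> * cmod \<zeta> + \<bar>of_int k\<bar> * cmod \<zeta> ^ 2"
    by (simp add: norm_mult norm_power)
  also have "\<dots> \<le> of_int H + of_int H * cmod \<zeta> + of_int H * cmod \<zeta> ^ 2"
    using assms by (intro add_mono mult_right_mono) auto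
  finally show ?thesis by (simp add: size\<^sub>\<zeta>_def algebra_simps)
qed

definition norm_bound :: real where "norm_bound = 64 * size\<^sub>\<theta> * size\<^sub>\<zeta>\<^sup>2"

text \<open>A Minkowski-type argument: among the \<open>(4m\<^sup>2 + 1)\<^sup>3\<close> lattice points with coordinates in
  \<open>[0, 4m\<^sup>2]\<close> two have images in the same cell of side lengths \<open>2 size\<^sub>\<theta> / m\<^sup>2\<close> and \<open>4 m size\<^sub>\<zeta>\<close>;
  the norm of their difference is bounded independently of \<open>m\<close>.\<close>

lemma small_element_bounded_norm:
  assumes m: "m \<ge> (1::nat)"
  obtains y where "y \<in> \<O>" "0 < y" "y < 2 * size\<^sub>\<theta> / real m ^ 2" "Nm y < norm_bound"
proof -
  define H :: int where "H = 4 * (int m)\<^sup>2"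
  define d1 where "d1 = 2 * size\<^sub>\<theta> / real m ^ 2"
  define d2 where "d2 = 4 * real m * size\<^sub>\<zeta>"
  have size: "size\<^sub>\<theta> \<ge> 1" "size\<^sub>\<zeta> \<ge> 1" by (simp_all add: size\<^sub>\<theta>_def size\<^sub>\<zeta>_def)
  have d: "d1 > 0" "d2 > 0" using size m by (simp_all add: d1_def d2_def)
  define P where "P = {0..H} \<times> {0..H} \<times> {0..H}"
  have "2 * (of_int H * size\<^sub>\<theta>) / d1 \<le> of_int (4 * int m ^ 4)"
    using size m by (simp add: H_def d1_def field_simps power2_eq_square eval_nat_numeral)
  moreover have "2 * (of_int H * size\<^sub>\<zeta>) / d2 \<le> of_int (2 * int m)"
    using size m by (simp add: H_def d2_def field_simps power2_eq_square)
  moreover have "nat (4 * int m ^ 4 + 1) * nat (2 * int m + 1) ^ 2 < card P"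
  proof -
    have "4 * int m ^ 4 + 1 = int (4 * m ^ 4 + 1)" "2 * int m + 1 = int (2 * m + 1)" "H + 1 = int (4 * m\<^sup>2 + 1)"
      by (simp_all add: H_def)
    moreover have "card P = nat (H + 1) ^ 3" by (simp add: P_def card_cartesian_product power3_eq_cube)
    ultimately show ?thesis using box_card_less[OF m] by (simp only: nat_int)
  qed
  moreover have "\<bar>lattice_point t\<bar> \<le> of_int H * size\<^sub>\<theta>" "cmod (\<sigma> (lattice_point t)) \<le> of_int H * size\<^sub>\<zeta>"
    if "t \<in> P" for t
    using that abs_lattice_point_le norm_\<sigma>_lattice_point_le by (auto simp: P_def)
  moreover have "finite P" by (simp add: P_def)
  ultimately obtain t1 t2 where t: "t1 \<in> P" "t2 \<in> P" "t1 \<noteq> t2" "\<bar>lattice_point t1 - lattice_point t2\<bar> < d1"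
      "\<bar>Re (\<sigma> (lattice_point t1) - \<sigma> (lattice_point t2))\<bar> < d2"
      "\<bar>Im (\<sigma> (lattice_point t1) - \<sigma> (lattice_point t2))\<bar> < d2"
    using pigeonhole_close_pair[of P lattice_point _ "\<lambda>t. \<sigma> (lattice_point t)" _ d1 d2] d by metis
  obtain i j k i' j' k' where t12: "t1 = (i, j, k)" "t2 = (i', j', k')" by (cases t1, cases t2)
  define x where "x = lattice_point t1 - lattice_point t2"
  have "x = lattice_point (i - i', j - j', k - k')"
    unfolding x_def t12 lattice_point_diff ..
  then have x: "x \<in> \<O>" "x \<noteq> 0"
    using t(3) lattice_point_eq_0_iff by (auto simp: \<O>_def t12)
  have \<sigma>x: "\<sigma> x = \<sigma> (lattice_point t1) - \<sigma> (lattice_point t2)"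
    unfolding x_def by (intro \<sigma>_diff order_subset_K) (auto simp: \<O>_def)
  define y where "y = \<bar>x\<bar>"
  have y: "y \<in> \<O>" "y > 0" "cmod (\<sigma> y) = cmod (\<sigma> x)"
    using x order_diff[OF of_int_in_order[of 0] x(1)] \<sigma>_uminus[OF order_subset_K[OF x(1)]]
    by (auto simp: y_def abs_if)
  have "(cmod (\<sigma> x))\<^sup>2 = (Re (\<sigma> x))\<^sup>2 + (Im (\<sigma> x))\<^sup>2" by (simp add: cmod_power2)
  also have "\<dots> \<le> 2 * d2\<^sup>2"
    using power_mono[OF less_imp_le[OF t(5)], of 2] power_mono[OF less_imp_le[OF t(6)], of 2] \<sigma>x by simp
  finally have "Nm y \<le> y * (2 * d2\<^sup>2)" using y by (simp add: Nm_def)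
  also have "\<dots> < d1 * (2 * d2\<^sup>2)" using t(4) d by (intro mult_strict_right_mono) (auto simp: y_def x_def)
  also have "\<dots> = norm_bound" using m by (simp add: d1_def d2_def norm_bound_def power_mult_distrib)
  finally show ?thesis using y t(4) by (intro that[of y]) (auto simp: y_def x_def d1_def)
qed

end

context cubic_field_generator
begin

lemma infinite_bounded_norm_elements: "infinite {y \<in> \<O>. 0 < y \<and> Nm y < norm_bound}"
  (is "infinite ?S")
proof
  assume fin: "finite ?S"
  obtain y0 where "y0 \<in> \<O>" "0 < y0" "Nm y0 < norm_bound"
    using small_element_bounded_norm[of 1] by blast
  then have "?S \<noteq> {}" by blast
  define \<mu> where "\<mu> = Min ?S"
  have "\<mu> \<in> ?S" unfolding \<mu>_def using fin \<open>?S \<noteq> {}\<close> by (rule Min_in)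
  then have \<mu>: "\<mu> > 0" by simp
  define m where "m = nat \<lceil>2 * size\<^sub>\<theta> / \<mu>\<rceil> + 1"
  have m: "m \<ge> 1" "real m > 2 * size\<^sub>\<theta> / \<mu>" unfolding m_def by linarith+
  have "2 * size\<^sub>\<theta> / real m ^ 2 \<le> 2 * size\<^sub>\<theta> / real m"
    using m(1) by (intro divide_left_mono) (auto simp: size\<^sub>\<theta>_def power2_eq_square)
  also have "\<dots> < \<mu>" using m \<mu> by (simp add: field_simps)
  finally have small: "2 * size\<^sub>\<theta> / real m ^ 2 < \<mu>" .
  obtain y where "y \<in> \<O>" "0 < y" "y < 2 * size\<^sub>\<theta> / real m ^ 2" "Nm y < norm_bound"
    using small_element_bounded_norm[OF m(1)] by blast
  then have "y \<in> ?S" "y < \<mu>" using small by auto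
  then show False using Min_le[OF fin, of y] by (simp add: \<mu>_def)
qed

lemma order_quotient:
  assumes "y1 \<in> \<O>" "y2 \<in> \<O>" "y2 \<noteq> 0" "z \<in> \<O>" and "y1 - y2 = Nm y2 * z"
  shows "y1 / y2 \<in> \<O>"
proof -
  have "y1 / y2 = 1 + (y1 - y2) / y2" using assms(3) by (simp add: field_simps)
  also have "\<dots> = 1 + z * (cmod (\<sigma> y2))\<^sup>2" using assms(3,5) by (simp add: Nm_def)
  finally show ?thesis
    using cmod_\<sigma>_squared_in_order[OF assms(2)] assms(4) of_int_in_order[of 1]
    by (simp add: order_add order_mult)
qed

text \<open>Infinitely many elements of bounded norm fall into finitely many classes (norm, and
  coordinates modulo the norm), so two distinct ones \<open>y1, y2\<close> share a class; then \<open>y1 / y2\<close>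
  and \<open>y2 / y1\<close> are both in \<open>\<O>\<close>.\<close>

lemma exists_congruent_pair:
  obtains y1 y2 z where "y1 \<in> \<O>" "y2 \<in> \<O>" "0 < y1" "0 < y2" "y1 \<noteq> y2" "Nm y1 = Nm y2"
    "z \<in> \<O>" "y1 - y2 = Nm y2 * z"
proof -
  let ?S = "{y \<in> \<O>. 0 < y \<and> Nm y < norm_bound}"
  have Nm_floor: "Nm y = of_int \<lfloor>Nm y\<rfloor>" if "y \<in> \<O>" for y
    using Nm_Ints[OF that] by (metis Ints_cases floor_of_int)
  define coord :: "real \<Rightarrow> int \<times> int \<times> int" where "coord = inv lattice_point"
  have coord: "lattice_point (coord y) = y" if "y \<in> \<O>" for y
    using that unfolding coord_def \<O>_def by (rule f_inv_into_f)
  define cls where "cls y = (let k = \<lfloor>Nm y\<rfloor>; (i, j, l) = coord y in (k, i mod k, j mod k, l mod k))" for y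
  define N where "N = \<lceil>norm_bound\<rceil>"
  have "cls ` ?S \<subseteq> {0..N} \<times> {0..N} \<times> {0..N} \<times> {0..N}"
  proof (rule image_subsetI)
    fix y assume y: "y \<in> ?S"
    define k where "k = \<lfloor>Nm y\<rfloor>"
    have "0 < Nm y" using Nm_pos[OF order_subset_K] y by simp
    moreover have "Nm y = of_int k" using Nm_floor[of y] y by (simp add: k_def)
    ultimately have k: "0 < k" "k \<le> N" using y unfolding N_def by (simp_all add: le_ceiling_iff)
    then have "i mod k \<in> {0..N}" for i by (simp add: order_trans[OF less_imp_le[OF pos_mod_bound]])
    then show "cls y \<in> {0..N} \<times> {0..N} \<times> {0..N} \<times> {0..N}"
      using k by (simp add: cls_def k_def[symmetric] Let_def split: prod.splits)
  qed
  then have "finite (cls ` ?S)" by (rule finite_subset) simp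
  then have "\<not> inj_on cls ?S" using infinite_bounded_norm_elements finite_imageD by blast
  then obtain y1 y2 where y: "y1 \<in> ?S" "y2 \<in> ?S" "y1 \<noteq> y2" "cls y1 = cls y2"
    unfolding inj_on_def by blast
  obtain i j l where c1: "coord y1 = (i, j, l)" by (cases "coord y1")
  obtain i' j' l' where c2: "coord y2 = (i', j', l')" by (cases "coord y2")
  define k where "k = \<lfloor>Nm y1\<rfloor>"
  have eqs: "\<lfloor>Nm y2\<rfloor> = k" "i mod k = i' mod k" "j mod k = j' mod k" "l mod k = l' mod k"
    using y(4) unfolding cls_def Let_def c1 c2 k_def by auto
  then obtain i'' j'' l'' where "i - i' = k * i''" "j - j' = k * j''" "l - l' = k * l''"
    by (metis dvd_def mod_eq_dvd_iff)
  then have "y1 - y2 = of_int k * lattice_point (i'', j'', l'')"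
    using coord[of y1] coord[of y2] y(1,2) unfolding c1 c2
    by (simp add: lattice_point_diff[symmetric]) (simp add: lattice_point_def algebra_simps)
  moreover have "Nm y1 = of_int k" "Nm y2 = of_int k"
    using Nm_floor[of y1] Nm_floor[of y2] y(1,2) eqs(1) by (simp_all add: k_def)
  moreover have "lattice_point (i'', j'', l'') \<in> \<O>" by (simp add: \<O>_def)
  ultimately show ?thesis using y by (intro that[of y1 y2 "lattice_point (i'', j'', l'')"]) auto
qed

lemma exists_unit_gt_1:
  obtains \<epsilon> where "\<epsilon> \<in> \<O>" "\<epsilon> > 1" "Nm \<epsilon> = 1"
proof -
  obtain y1 y2 z where y: "y1 \<in> \<O>" "y2 \<in> \<O>" "0 < y1" "0 < y2" "y1 \<noteq> y2" "Nm y1 = Nm y2"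
    "z \<in> \<O>" "y1 - y2 = Nm y2 * z"
    using exists_congruent_pair by blast
  have q: "y1 / y2 \<in> \<O>" "y2 / y1 \<in> \<O>"
    using order_quotient[OF y(1,2) _ y(7,8)] order_quotient[OF y(2,1) _ order_diff[OF of_int_in_order[of 0] y(7)]]
      y(3,4,6,8) by (auto simp: algebra_simps)
  have "Nm (y1 / y2) * Nm (y2 / y1) = Nm (y1 / y2 * (y2 / y1))"
    using Nm_mult[OF order_subset_K[OF q(1)] order_subset_K[OF q(2)]] by simp
  also have "\<dots> = 1" using y(3,4) by (simp add: Nm_one)
  finally have prod: "Nm (y1 / y2) * Nm (y2 / y1) = 1" .
  obtain n1 n2 where n: "Nm (y1 / y2) = of_int n1" "Nm (y2 / y1) = of_int n2"
    using Nm_Ints[OF q(1)] Nm_Ints[OF q(2)] by (metis Ints_cases)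
  have "n1 > 0" using Nm_pos[OF order_subset_K[OF q(1)]] y(3,4) n(1) by simp
  moreover have "n1 * n2 = 1" using prod n by (metis of_int_eq_1_iff of_int_mult)
  ultimately have "Nm (y1 / y2) = 1" "Nm (y2 / y1) = 1" using n pos_zmult_eq_1_iff by auto
  moreover have "y1 / y2 > 1 \<or> y2 / y1 > 1" using y(3-5) by (auto simp: field_simps)
  ultimately show ?thesis using q that by blast
qed

end

section \<open>The trace sequence\<close>

context cubic_field_generator
begin

lemma exists_denominator:
  assumes "x \<in> K"
  obtains d :: int where "d > 0" "of_int d * x \<in> \<O>"
proof -
  obtain u v w where x: "u \<in> \<rat>" "v \<in> \<rat>" "w \<in> \<rat>" "x = u + v * \<theta> + w * \<theta>\<^sup>2"
    using basis_coords_exist[OF assms] .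
  obtain du mu where u: "du > 0" "u = of_int mu / of_int du" using Rats_int_denominator[OF x(1)] .
  obtain dv mv where v: "dv > 0" "v = of_int mv / of_int dv" using Rats_int_denominator[OF x(2)] .
  obtain dw mw where w: "dw > 0" "w = of_int mw / of_int dw" using Rats_int_denominator[OF x(3)] .
  have "of_int (du * dv * dw) * x
      = of_int (mu * dv * dw) + of_int (mv * du * dw) * \<theta> + of_int (mw * du * dv) * \<theta>\<^sup>2"
    using u(1) v(1) w(1) unfolding x(4) u(2) v(2) w(2) by (simp add: field_simps)
  then have "of_int (du * dv * dw) * x \<in> \<O>" unfolding mem_order_iff by blast
  then show ?thesis using u v w by (intro that[of "du * dv * dw"]) simp_all
qed

text \<open>\<open>\<delta> a = 3a\<^sup>2 - 2 Tr(a) a + e\<^sub>2(a)\<close> is the derivative of the characteristic polynomial of \<open>a\<close>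
  evaluated at \<open>a\<close>; its conjugate \<open>\<sigma> (\<delta> a)\<close> factors over the conjugates of \<open>a\<close>.\<close>

definition \<delta> :: "real \<Rightarrow> real" where
  "\<delta> a = 3 * a\<^sup>2 - 2 * Tr a * a + (Tr a ^ 2 - Tr (a\<^sup>2)) / 2"

lemma \<delta>_in_K:
  assumes a: "a \<in> K"
  shows "\<delta> a \<in> K"
proof -
  have "Tr a \<in> \<rat>" "(Tr a ^ 2 - Tr (a\<^sup>2)) / 2 \<in> \<rat>"
    using Tr_Rats[OF a] Tr_Rats[OF K_power[OF a]] by simp_all
  then have "Tr a \<in> K" "(Tr a ^ 2 - Tr (a\<^sup>2)) / 2 \<in> K" "3 \<in> K" "2 \<in> K" by (simp_all add: K_Rats)
  then show ?thesis unfolding \<delta>_def by (intro K_add K_diff K_mult K_power) (use a in auto)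
qed

lemma \<sigma>_\<delta>:
  assumes a: "a \<in> K"
  shows "\<sigma> (\<delta> a) = (\<sigma> a - of_real a) * (\<sigma> a - cnj (\<sigma> a))"
proof -
  define s where "s = \<sigma> a"
  have Tr: "complex_of_real (Tr a) = of_real a + s + cnj s"
    unfolding s_def of_real_Tr ..
  have Tr2: "complex_of_real (Tr (a\<^sup>2)) = of_real a ^ 2 + s\<^sup>2 + cnj s ^ 2"
    unfolding s_def of_real_Tr \<sigma>_power[OF a] by simp
  have Rats: "Tr a \<in> \<rat>" "(Tr a ^ 2 - Tr (a\<^sup>2)) / 2 \<in> \<rat>"
    using Tr_Rats[OF a] Tr_Rats[OF K_power[OF a]] by simp_all
  have "\<sigma> (\<delta> a) = 3 * s\<^sup>2 - 2 * of_real (Tr a) * s + of_real ((Tr a ^ 2 - Tr (a\<^sup>2)) / 2)"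
    unfolding \<delta>_def using a Rats \<sigma>_Rats[of 3] \<sigma>_Rats[of 2]
    by (simp add: \<sigma>_add \<sigma>_diff \<sigma>_mult \<sigma>_Rats \<sigma>_power s_def K_add K_diff K_mult K_Rats K_power)
  also have "\<dots> = (s - of_real a) * (s - cnj s)"
    unfolding of_real_divide of_real_diff of_real_power Tr Tr2 by (simp add: field_simps power2_eq_square)
  finally show ?thesis by (simp add: s_def)
qed

text \<open>Twisting by \<open>1 / \<delta> a\<close> turns \<open>a - \<sigma> a\<close> into \<open>-1 / (\<sigma> a - cnj (\<sigma> a))\<close>, which is purely imaginary.\<close>

lemma exists_imaginary_twist:
  assumes a: "a \<in> K"
  obtains w where "w \<in> K" "w \<noteq> 0" "Re (\<sigma> w * (of_real a - \<sigma> a)) = 0"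
proof (cases "a \<in> \<rat>")
  case True
  then show ?thesis using that[of 1] K_Rats[of 1] by (simp add: \<sigma>_Rats)
next
  case False
  define s where "s = \<sigma> a"
  have "Im s \<noteq> 0" unfolding s_def by (rule Im_\<sigma>_irrational[OF a False])
  then have ne: "s - cnj s \<noteq> 0" "s - of_real a \<noteq> 0" by (auto simp: complex_eq_iff)
  then have "\<delta> a \<noteq> 0" using \<sigma>_\<delta>[OF a] by (auto simp: s_def \<sigma>_Rats)
  have "\<sigma> (inverse (\<delta> a)) * (of_real a - s) = - ((s - of_real a) * inverse (s - of_real a) * inverse (s - cnj s))"
    unfolding \<sigma>_inverse[OF \<delta>_in_K[OF a]] \<sigma>_\<delta>[OF a] s_def[symmetric] inverse_mult_distrib
    by (simp add: algebra_simps)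
  also have "\<dots> = - inverse (s - cnj s)" using ne(2) by simp
  finally have "\<sigma> (inverse (\<delta> a)) * (of_real a - s) = - inverse (s - cnj s)" .
  moreover have "Re (inverse (s - cnj s)) = 0" by (simp add: Re_divide)
  ultimately show ?thesis
    using \<delta>_in_K[OF a] \<open>\<delta> a \<noteq> 0\<close> by (intro that[of "inverse (\<delta> a)"]) (auto simp: s_def K_inverse)
qed

lemma exists_integral_twist:
  assumes "\<alpha> \<in> K" "\<beta> \<in> K"
  obtains \<omega> where "\<omega> \<in> \<O>" "\<omega> > 0" "\<omega> * \<alpha> \<in> \<O>" "\<omega> * \<beta> \<in> \<O>" "Re (\<sigma> \<omega> * (of_real \<alpha> - \<sigma> \<alpha>)) = 0"
proof -
  obtain w where w: "w \<in> K" "w \<noteq> 0" "Re (\<sigma> w * (of_real \<alpha> - \<sigma> \<alpha>)) = 0"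
    using exists_imaginary_twist[OF assms(1)] .
  obtain d1 where d1: "d1 > 0" "of_int d1 * w \<in> \<O>" using exists_denominator[OF w(1)] .
  obtain d2 where d2: "d2 > 0" "of_int d2 * (w * \<alpha>) \<in> \<O>" using exists_denominator[OF K_mult[OF w(1) assms(1)]] .
  obtain d3 where d3: "d3 > 0" "of_int d3 * (w * \<beta>) \<in> \<O>" using exists_denominator[OF K_mult[OF w(1) assms(2)]] .
  define sg :: int where "sg = (if w > 0 then 1 else -1)"
  define D where "D = sg * d1 * d2 * d3"
  have "of_int D * w > 0"
    using d1 d2 d3 w(2) by (auto simp: D_def sg_def zero_less_mult_iff mult_less_0_iff)
  moreover have "of_int D * w = of_int (sg * d2 * d3) * (of_int d1 * w)"
    "of_int D * w * \<alpha> = of_int (sg * d1 * d3) * (of_int d2 * (w * \<alpha>))"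
    "of_int D * w * \<beta> = of_int (sg * d1 * d2) * (of_int d3 * (w * \<beta>))"
    by (simp_all add: D_def algebra_simps)
  then have "of_int D * w \<in> \<O>" "of_int D * w * \<alpha> \<in> \<O>" "of_int D * w * \<beta> \<in> \<O>"
    using order_mult[OF of_int_in_order d1(2)] order_mult[OF of_int_in_order d2(2)]
      order_mult[OF of_int_in_order d3(2)] by metis+
  moreover have "Re (\<sigma> (of_int D * w) * (of_real \<alpha> - \<sigma> \<alpha>)) = of_int D * Re (\<sigma> w * (of_real \<alpha> - \<sigma> \<alpha>))"
    using \<sigma>_mult[OF K_Rats[OF Rats_of_int] w(1), of D] \<sigma>_Rats[OF Rats_of_int, of D] by (simp add: algebra_simps)
  then have "Re (\<sigma> (of_int D * w) * (of_real \<alpha> - \<sigma> \<alpha>)) = 0" using w(3) by simp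
  ultimately show ?thesis by (intro that) auto
qed

lemma Tr_mult_error:
  assumes "x \<in> K" "g \<in> K"
  shows "Tr x * g - Tr (x * g) = 2 * Re (\<sigma> x * (of_real g - \<sigma> g))"
  unfolding Tr_def \<sigma>_mult[OF assms] by (simp add: algebra_simps)

context
  fixes \<epsilon> \<omega> :: real
  assumes \<epsilon>\<omega>: "\<epsilon> \<in> K" "\<omega> \<in> K"
begin

lemma \<sigma>_power_mult: "\<sigma> (\<epsilon> ^ n * \<omega>) = \<sigma> \<epsilon> ^ n * \<sigma> \<omega>"
  using \<sigma>_mult[OF K_power \<epsilon>\<omega>(2)] \<sigma>_power \<epsilon>\<omega>(1) by simp

lemma abs_Tr_power_mult_diff_le: "\<bar>Tr (\<epsilon> ^ n * \<omega>) - \<epsilon> ^ n * \<omega>\<bar> \<le> 2 * cmod (\<sigma> \<epsilon>) ^ n * cmod (\<sigma> \<omega>)"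
  using abs_Re_le_cmod[of "\<sigma> \<epsilon> ^ n * \<sigma> \<omega>"]
  by (simp add: Tr_def \<sigma>_power_mult norm_mult norm_power del: times_complex.sel)

lemma Tr_power_mult_error:
  assumes "g \<in> K"
  shows "Tr (\<epsilon> ^ n * \<omega>) * g - Tr (\<epsilon> ^ n * (\<omega> * g)) = 2 * Re (\<sigma> \<epsilon> ^ n * (\<sigma> \<omega> * (of_real g - \<sigma> g)))"
  using Tr_mult_error[OF K_mult[OF K_power[OF \<epsilon>\<omega>(1)] \<epsilon>\<omega>(2)] assms]
  by (simp add: \<sigma>_power_mult mult.assoc del: times_complex.sel)

lemma abs_Tr_power_mult_error_le:
  assumes "g \<in> K"
  shows "\<bar>Tr (\<epsilon> ^ n * \<omega>) * g - Tr (\<epsilon> ^ n * (\<omega> * g))\<bar> \<le> 2 * cmod (\<sigma> \<epsilon>) ^ n * cmod (\<sigma> \<omega> * (of_real g - \<sigma> g))"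
  unfolding Tr_power_mult_error[OF assms]
  using abs_Re_le_cmod[of "\<sigma> \<epsilon> ^ n * (\<sigma> \<omega> * (of_real g - \<sigma> g))"] by (simp add: norm_mult norm_power)

lemma abs_Tr_power_mult_error_imaginary:
  assumes "g \<in> K" "Re (\<sigma> \<omega> * (of_real g - \<sigma> g)) = 0"
  shows "\<bar>Tr (\<epsilon> ^ n * \<omega>) * g - Tr (\<epsilon> ^ n * (\<omega> * g))\<bar> = 2 * \<bar>Im (\<sigma> \<epsilon> ^ n)\<bar> * \<bar>Im (\<sigma> \<omega> * (of_real g - \<sigma> g))\<bar>"
  unfolding Tr_power_mult_error[OF assms(1)] using assms(2) by (simp add: abs_mult)

end

lemma norm_\<sigma>_unit_power:
  assumes "\<epsilon> \<in> K" "\<epsilon> > 0" "Nm \<epsilon> = 1"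
  shows "cmod (\<sigma> \<epsilon>) ^ n = 1 / sqrt \<epsilon> ^ n"
proof -
  have "(cmod (\<sigma> \<epsilon>) * sqrt \<epsilon>)\<^sup>2 = 1"
    using assms by (simp add: Nm_def power_mult_distrib mult.commute)
  moreover have "cmod (\<sigma> \<epsilon>) * sqrt \<epsilon> \<ge> 0" using assms(2) by simp
  ultimately have "cmod (\<sigma> \<epsilon>) * sqrt \<epsilon> = 1" unfolding power2_eq_1_iff by linarith
  then have "cmod (\<sigma> \<epsilon>) ^ n * sqrt \<epsilon> ^ n = 1" by (metis power_mult_distrib power_one)
  then show ?thesis using assms(2) by (simp add: field_simps)
qed

lemma peck_sequence_exists:
  assumes \<alpha>: "\<alpha> \<in> K" and \<beta>: "\<beta> \<in> K"
  shows "\<exists>s. peck_sequence s \<alpha> \<beta>"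
proof -
  obtain \<epsilon> where \<epsilon>: "\<epsilon> \<in> \<O>" "\<epsilon> > 1" "Nm \<epsilon> = 1" using exists_unit_gt_1 .
  obtain \<omega> where \<omega>: "\<omega> \<in> \<O>" "\<omega> > 0" "\<omega> * \<alpha> \<in> \<O>" "\<omega> * \<beta> \<in> \<O>" "Re (\<sigma> \<omega> * (of_real \<alpha> - \<sigma> \<alpha>)) = 0"
    using exists_integral_twist[OF \<alpha> \<beta>] .
  have K: "\<epsilon> \<in> K" "\<omega> \<in> K" using \<epsilon>(1) \<omega>(1) by (simp_all add: order_subset_K)
  define \<rho> where "\<rho> = sqrt \<epsilon>"
  have \<epsilon>_eq: "\<epsilon> = \<rho>\<^sup>2" using \<epsilon>(2) by (simp add: \<rho>_def)
  have \<rho>1: "\<rho> > 1" using \<epsilon>(2) by (simp add: \<rho>_def)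
  have \<epsilon>_power: "\<epsilon> ^ n = (\<rho> ^ n)\<^sup>2" for n
    unfolding \<epsilon>_eq by (simp add: power_mult[symmetric] mult.commute)
  have \<sigma>\<epsilon>_power: "cmod (\<sigma> \<epsilon>) ^ n = 1 / \<rho> ^ n" for n
    using \<epsilon> norm_\<sigma>_unit_power[OF K(1)] by (simp add: \<rho>_def)
  define t where "t n = Tr (\<epsilon> ^ n * \<omega>)" for n
  have Ints: "Tr (\<epsilon> ^ n * x) \<in> \<int>" if "x \<in> \<O>" for n x
    using Tr_Ints[OF order_mult[OF order_power[OF \<epsilon>(1)] that]] .
  have close: "\<bar>t n - \<omega> * (\<rho> ^ n)\<^sup>2\<bar> \<le> 2 * cmod (\<sigma> \<omega>)" for n
    using abs_Tr_power_mult_diff_le[OF K, of n] mult_left_le_one_le[of "2 * cmod (\<sigma> \<omega>)" "1 / \<rho> ^ n"] \<rho>1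
    by (simp add: t_def \<epsilon>_power \<sigma>\<epsilon>_power mult.commute)
  have approx: "\<exists>k\<in>\<int>. \<bar>t n * g - k\<bar> \<le> 2 * cmod (\<sigma> \<omega> * (of_real g - \<sigma> g)) / \<rho> ^ n"
    if "g \<in> K" "\<omega> * g \<in> \<O>" for n g
    using Ints[OF that(2)] abs_Tr_power_mult_error_le[OF K that(1), of n] \<sigma>\<epsilon>_power unfolding t_def by auto
  define G where "G = {n. 1 \<le> n \<and> \<bar>Im (\<sigma> \<epsilon> ^ n)\<bar> \<le> 2 * pi * cmod (\<sigma> \<epsilon>) ^ n / real n}"
  have approx_G: "\<exists>k\<in>\<int>. \<bar>t n * \<alpha> - k\<bar> \<le> 4 * pi * \<bar>Im (\<sigma> \<omega> * (of_real \<alpha> - \<sigma> \<alpha>))\<bar> / (real n * \<rho> ^ n)"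
    if "n \<in> G" for n
  proof
    show "Tr (\<epsilon> ^ n * (\<omega> * \<alpha>)) \<in> \<int>" using Ints[OF \<omega>(3)] .
    text \<open>Since \<open>\<sigma> \<omega> (\<alpha> - \<sigma> \<alpha>)\<close> is purely imaginary, only \<open>Im (\<sigma> \<epsilon>\<^sup>n)\<close> contributes to the error.\<close>
    have "\<bar>t n * \<alpha> - Tr (\<epsilon> ^ n * (\<omega> * \<alpha>))\<bar> = 2 * \<bar>Im (\<sigma> \<epsilon> ^ n)\<bar> * \<bar>Im (\<sigma> \<omega> * (of_real \<alpha> - \<sigma> \<alpha>))\<bar>"
      unfolding t_def by (rule abs_Tr_power_mult_error_imaginary[OF K \<alpha> \<omega>(5)])
    also have "\<dots> \<le> 2 * (2 * pi * cmod (\<sigma> \<epsilon>) ^ n / real n) * \<bar>Im (\<sigma> \<omega> * (of_real \<alpha> - \<sigma> \<alpha>))\<bar>"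
      using that by (intro mult_right_mono mult_left_mono) (auto simp: G_def)
    also have "\<dots> = 4 * pi * \<bar>Im (\<sigma> \<omega> * (of_real \<alpha> - \<sigma> \<alpha>))\<bar> / (real n * \<rho> ^ n)"
      by (simp add: \<sigma>\<epsilon>_power)
    finally show "\<bar>t n * \<alpha> - Tr (\<epsilon> ^ n * (\<omega> * \<alpha>))\<bar> \<le> \<dots>" .
  qed
  show ?thesis
  proof (rule peck_sequence_of_trace_approximations[OF \<rho>1 \<omega>(2) close])
    show "t n \<in> \<int>" for n unfolding t_def using Ints[OF \<omega>(1)] .
    show "infinite G" unfolding G_def by (rule infinite_powers_near_real_axis)
  qed (fact approx[OF \<alpha> \<omega>(3)] approx[OF \<beta> \<omega>(4)] approx_G)+
qed

end

theorem theorem3: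
  fixes K :: "real set" and \<alpha> \<beta> :: real
  assumes "cubic_number_field K"
    and "card (real_embeddings K) = 1"
    and "\<alpha> \<in> K" and "\<beta> \<in> K"
  shows "\<exists>s. peck_sequence s \<alpha> \<beta>"
proof -
  obtain b :: "nat \<Rightarrow> real" where "cubic_field K b"
    using assms(1) unfolding cubic_number_field_def cubic_field_def by blast
  then interpret cubic_field K b .
  obtain \<theta> A B C where "\<theta> \<in> K" "\<theta> \<notin> \<rat>" "\<theta> ^ 3 = of_int A * \<theta>\<^sup>2 + of_int B * \<theta> + of_int C"
    using exists_integral_generator .
  then interpret cubic_field_generator K b \<theta> A B C
    using assms(2) by unfold_locales
  show ?thesis using peck_sequence_exists[OF assms(3,4)] .
qed

end
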